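(* Let $\theta>0$, $a>0$, and set $M=D_0^2-\theta\Omega$ with $\Omega=D_1^2+x_1^2\xi_n^2$. Then there exist $C>0$ and $\tau_0>0$ such that for every real $s\ge1$, every $\tau\ge\tau_0$, every $\xi_n\in\mathbb{R}$ and every $u\in C_0^\infty(\mathbb{R}^{n+1})$, $$\int_0^\infty W\|Mu\|^2dx_0\ \ge\ C\,W(0)\Big(\tau\langle\xi_n\rangle^{1/s}E_1(u(0))+\tau^3\langle\xi_n\rangle^{3/s}E_0(u(0))\Big)+C\tau^2\int_0^\infty W\langle\xi_n\rangle^{2/s}E_1(u(x_0))\,dx_0+C\tau^4\int_0^\infty W\langle\xi_n\rangle^{4/s}E_0(u(x_0))\,dx_0,$$ where $W=W(x_0)=\exp\big(2\tau\langle\xi_n\rangle^{1/s}(x_0-a)\big)$ and $\langle\xi_n\rangle=\sqrt{1+\xi_n^2}$.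
   Context: Coordinates are $x=(x_0,x_1,x'',x_n)\in\mathbb{R}^{n+1}$, $D_j=-i\partial_{x_j}$. For $u$ one takes the partial Fourier transform $\hat u(x_0,x_1,x'',\xi_n)$ in $x_n$; for fixed $x_0$ and $\xi_n$, $\|\cdot\|$ is the $L^2$ norm in $(x_1,x'')$ of $\hat u$, and operators act on $\hat u$ (so $D_n$ becomes multiplication by $\xi_n$). For $j=0,1$, $E_j(u(x_0))=\|D_0^j\hat u(x_0)\|^2+\|D_1^j\hat u(x_0)\|^2+\|(x_1\xi_n)^j\hat u(x_0)\|^2$. *)

theory Defs
  imports "HOL-Analysis.Analysis"
begin

text \<open>Points of R^(n+1) are tuples (x0, x1, x'', xn) with x'' in a Euclidean space 'a.\<close>

text \<open>Iterated partial (directional) derivatives: iter_partial f vs g means that g is obtained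
  from f by differentiating successively in the directions listed in vs (last element first).\<close>
inductive iter_partial ::
  "('a::euclidean_space \<Rightarrow> 'b::real_normed_vector) \<Rightarrow> 'a list \<Rightarrow> ('a \<Rightarrow> 'b) \<Rightarrow> bool" where
  ip_nil: "iter_partial f [] f"
| ip_cons: "iter_partial f vs g \<Longrightarrow>
     (\<And>x. ((\<lambda>t. g (x + t *\<^sub>R v)) has_vector_derivative g' x) (at 0)) \<Longrightarrow>
     iter_partial f (v # vs) g'"

definition smooth_fun :: "('a::euclidean_space \<Rightarrow> 'b::real_normed_vector) \<Rightarrow> bool" where
  "smooth_fun f \<longleftrightarrow> (\<forall>vs. set vs \<subseteq> Basis \<longrightarrow> (\<exists>g. iter_partial f vs g \<and> continuous_on UNIV g))"

definition C0_inf :: "('a::euclidean_space \<Rightarrow> 'b::real_normed_vector) \<Rightarrow> bool" where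
  "C0_inf f \<longleftrightarrow> smooth_fun f \<and> compact (closure {x. f x \<noteq> 0})"

definition uhat :: "(real \<times> real \<times> 'a::euclidean_space \<times> real \<Rightarrow> complex) \<Rightarrow> real \<Rightarrow> real \<Rightarrow> 'a \<Rightarrow> real \<Rightarrow> complex" where
  "uhat u x0 x1 y \<xi> = (LINT xn|lborel. exp (- \<i> * complex_of_real (xn * \<xi>)) * u (x0, x1, y, xn))"

definition nsq :: "(real \<Rightarrow> 'a::euclidean_space \<Rightarrow> complex) \<Rightarrow> real" where
  "nsq w = (LINT p|lborel. (cmod (w (fst p) (snd p)))\<^sup>2)"

definition D0 :: "(real \<Rightarrow> real \<Rightarrow> 'a \<Rightarrow> complex) \<Rightarrow> real \<Rightarrow> real \<Rightarrow> 'a \<Rightarrow> complex" where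
  "D0 v x0 x1 y = - \<i> * vector_derivative (\<lambda>t. v t x1 y) (at x0)"

definition D1 :: "(real \<Rightarrow> real \<Rightarrow> 'a \<Rightarrow> complex) \<Rightarrow> real \<Rightarrow> real \<Rightarrow> 'a \<Rightarrow> complex" where
  "D1 v x0 x1 y = - \<i> * vector_derivative (\<lambda>t. v x0 t y) (at x1)"

definition Mop :: "real \<Rightarrow> real \<Rightarrow> (real \<Rightarrow> real \<Rightarrow> 'a \<Rightarrow> complex) \<Rightarrow> real \<Rightarrow> real \<Rightarrow> 'a \<Rightarrow> complex" where
  "Mop \<theta> \<xi> v x0 x1 y =
     D0 (D0 v) x0 x1 y - complex_of_real \<theta> *
       (D1 (D1 v) x0 x1 y + complex_of_real ((x1 * \<xi>)\<^sup>2) * v x0 x1 y)"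

text \<open>E_j(u(x0)) = ||D_0^j v(x0)||^2 + ||D_1^j v(x0)||^2 + ||(x1 \<xi>)^j v(x0)||^2 for j = 0, 1.\<close>
definition E0 :: "real \<Rightarrow> (real \<Rightarrow> real \<Rightarrow> 'a::euclidean_space \<Rightarrow> complex) \<Rightarrow> real \<Rightarrow> real" where
  "E0 \<xi> v x0 = nsq (v x0) + nsq (v x0) + nsq (v x0)"

definition E1 :: "real \<Rightarrow> (real \<Rightarrow> real \<Rightarrow> 'a::euclidean_space \<Rightarrow> complex) \<Rightarrow> real \<Rightarrow> real" where
  "E1 \<xi> v x0 = nsq (D0 v x0) + nsq (D1 v x0)
     + nsq (\<lambda>x1 y. complex_of_real (x1 * \<xi>) * v x0 x1 y)"

definition jb :: "real \<Rightarrow> real" where "jb \<xi> = sqrt (1 + \<xi>\<^sup>2)"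

end

theory Submission
  imports Defs
begin

(* After the partial Fourier transform in xn (frequency xi fixed), a test function u becomes a
   function v(x0, x1, x'') which, with its derivatives up to second order in (x0, x1), is
   continuous with compact support (locale cc_second_order).  With L = tau <xi>^(1/s) we
   conjugate by the weight e = exp (L (x0 - a)): w = e v satisfies e M v = A + 2 L d0 w where
   A = M w - L^2 w (locale exp_conjugation).  Two integrations by parts give the identities
     int |A + 2L w0|^2 = int |A|^2 + 4 L^2 int |w0|^2 + 2L int_{x0=0} energy(w),
     int <A, w> = int_{x0=0} <w0, w> + int |w0|^2 - L^2 int |w|^2 - theta int (|w1|^2 + (x1 xi)^2 |w|^2),
   and two Cauchy-Schwarz estimates turn them into control of the boundary energy and of
   L^2 |w0|^2, L^4 |w|^2 and L^2 theta (|w1|^2 + (x1 xi)^2 |w|^2).  Returning from w to v gives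
   the theorem with C = 1 / (8 + 2 / theta) and tau0 = 1. *)

definition cc_fun :: "(real \<Rightarrow> real \<Rightarrow> 'a::euclidean_space \<Rightarrow> 'b::real_normed_vector) \<Rightarrow> bool" where
  "cc_fun f \<longleftrightarrow> continuous_on UNIV (\<lambda>z. f (fst z) (fst (snd z)) (snd (snd z)))
     \<and> (\<exists>R. \<forall>a b c. f a b c \<noteq> 0 \<longrightarrow> norm (a, b, c) \<le> R)"

definition half_int :: "(real \<Rightarrow> real \<Rightarrow> 'a::euclidean_space \<Rightarrow> real) \<Rightarrow> real" where
  "half_int f = (LINT x0:{0<..}|lborel. (LINT p|lborel. f x0 (fst p) (snd p)))"

definition slice_int :: "(real \<Rightarrow> 'a::euclidean_space \<Rightarrow> real) \<Rightarrow> real" where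
  "slice_int g = (LINT p|lborel. g (fst p) (snd p))"

lemma cc_fun_bound:
  assumes "cc_fun f"
  obtains R where "\<And>a b c. f a b c \<noteq> 0 \<Longrightarrow> \<bar>a\<bar> \<le> R \<and> \<bar>b\<bar> \<le> R \<and> norm (b, c) \<le> R"
proof -
  obtain R where R: "\<And>a b c. f a b c \<noteq> 0 \<Longrightarrow> norm (a, b, c) \<le> R"
    using assms unfolding cc_fun_def by blast
  show ?thesis
  proof (rule that)
    fix a b c assume "f a b c \<noteq> 0"
    hence "norm (a, b, c) \<le> R" by (rule R)
    moreover have "\<bar>a\<bar> \<le> norm (a, b, c)" using norm_fst_le[of a "(b, c)"] by simp
    moreover have "norm (b, c) \<le> norm (a, b, c)" using norm_snd_le[of "(b, c)" a] by simp
    moreover have "\<bar>b\<bar> \<le> norm (b, c)" using norm_fst_le[of b c] by simp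
    ultimately show "\<bar>a\<bar> \<le> R \<and> \<bar>b\<bar> \<le> R \<and> norm (b, c) \<le> R" by linarith
  qed
qed

lemma continuous_on_compose_UNIV:
  assumes "continuous_on UNIV g" "continuous_on UNIV h"
  shows "continuous_on UNIV (\<lambda>x. g (h x))"
  using continuous_on_compose[OF assms(2) continuous_on_subset[OF assms(1)]] by (simp add: o_def)

lemma cc_fun_continuous:
  assumes "cc_fun f"
  shows "continuous_on UNIV (\<lambda>p. f a (fst p) (snd p))"
    and "continuous_on UNIV (\<lambda>t. f t b c)"
    and "continuous_on UNIV (\<lambda>t. f a t c)"
proof -
  have f: "continuous_on UNIV (\<lambda>z. f (fst z) (fst (snd z)) (snd (snd z)))"
    using assms by (simp add: cc_fun_def)
  show "continuous_on UNIV (\<lambda>p. f a (fst p) (snd p))"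
    using continuous_on_compose_UNIV[OF f, of "\<lambda>p. (a, p)"] by (simp add: continuous_intros)
  show "continuous_on UNIV (\<lambda>t. f t b c)"
    using continuous_on_compose_UNIV[OF f, of "\<lambda>t. (t, b, c)"] by (simp add: continuous_intros)
  show "continuous_on UNIV (\<lambda>t. f a t c)"
    using continuous_on_compose_UNIV[OF f, of "\<lambda>t. (a, t, c)"] by (simp add: continuous_intros)
qed

lemma integrable_continuous_bounded_support:
  fixes g :: "'c::euclidean_space \<Rightarrow> 'b::{banach, second_countable_topology}"
  assumes "continuous_on UNIV g" "\<And>z. g z \<noteq> 0 \<Longrightarrow> norm z \<le> R"
  shows "integrable lborel g"
proof -
  have "integrable lborel (\<lambda>x. indicator (cball 0 R) x *\<^sub>R g x)"
    by (rule borel_integrable_compact) (auto intro: continuous_on_subset[OF assms(1)])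
  moreover have "(\<lambda>x. indicator (cball 0 R) x *\<^sub>R g x) = g"
    using assms(2) by (force simp: indicator_def fun_eq_iff)
  ultimately show ?thesis by simp
qed

lemma cc_fun_integrable:
  fixes f :: "real \<Rightarrow> real \<Rightarrow> 'a::euclidean_space \<Rightarrow> 'b::{banach, second_countable_topology}"
  assumes "cc_fun f"
  shows "integrable lborel (\<lambda>z. f (fst z) (fst (snd z)) (snd (snd z)))"
    and "integrable lborel (\<lambda>p. f a (fst p) (snd p))"
proof -
  obtain R where R: "\<And>a b c. f a b c \<noteq> 0 \<Longrightarrow> norm (a, b, c) \<le> R"
    using assms unfolding cc_fun_def by blast
  show "integrable lborel (\<lambda>z. f (fst z) (fst (snd z)) (snd (snd z)))"
    using assms R by (intro integrable_continuous_bounded_support[of _ R]) (auto simp: cc_fun_def)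
  obtain R' where R': "\<And>a b c. f a b c \<noteq> 0 \<Longrightarrow> \<bar>a\<bar> \<le> R' \<and> \<bar>b\<bar> \<le> R' \<and> norm (b, c) \<le> R'"
    using cc_fun_bound[OF assms] by blast
  show "integrable lborel (\<lambda>p. f a (fst p) (snd p))"
    by (rule integrable_continuous_bounded_support[of _ R'], rule cc_fun_continuous(1)[OF assms])
      (use R' in force)
qed

text \<open>The half-space integral of a \<open>cc_fun\<close> is a genuine integral over the whole space
  (Fubini); this is what makes it linear and monotone.\<close>
lemma half_int_as_integral:
  fixes f :: "real \<Rightarrow> real \<Rightarrow> 'a::euclidean_space \<Rightarrow> real"
  assumes "cc_fun f"
  defines "g \<equiv> \<lambda>z. indicator {0<..} (fst z) * f (fst z) (fst (snd z)) (snd (snd z))"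
  shows "integrable lborel g" and "half_int f = integral\<^sup>L lborel g"
proof -
  have "integrable lborel (\<lambda>z::real \<times> real \<times> 'a.
      indicator {z. fst z \<in> {0<..}} z *\<^sub>R f (fst z) (fst (snd z)) (snd (snd z)))"
    by (rule integrable_mult_indicator[OF _ cc_fun_integrable(1)[OF assms(1)]])
      (auto intro!: borel_open open_Collect_less continuous_intros)
  thus ig: "integrable lborel g" by (simp add: g_def indicator_def)
  have ig2: "integrable (lborel \<Otimes>\<^sub>M lborel) (\<lambda>(x0, p). indicator {0<..} x0 * f x0 (fst p) (snd p))"
    using ig by (simp add: g_def lborel_prod split_beta')
  have "half_int f = (\<integral>x0. (\<integral>p. indicator {0<..} x0 * f x0 (fst p) (snd p) \<partial>lborel) \<partial>lborel)"
    by (simp add: half_int_def set_lebesgue_integral_def)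
  also have "\<dots> = integral\<^sup>L (lborel \<Otimes>\<^sub>M lborel) (\<lambda>(x0, p). indicator {0<..} x0 * f x0 (fst p) (snd p))"
    by (rule lborel_pair.integral_fst[OF ig2])
  also have "\<dots> = integral\<^sup>L lborel g"
    by (simp add: g_def lborel_prod split_beta')
  finally show "half_int f = integral\<^sup>L lborel g" .
qed

lemma cc_fun_add: "cc_fun f \<Longrightarrow> cc_fun g \<Longrightarrow> cc_fun (\<lambda>a b c. f a b c + g a b c)"
  unfolding cc_fun_def
proof (elim conjE exE, intro conjI)
  fix R1 R2
  assume "continuous_on UNIV (\<lambda>z. f (fst z) (fst (snd z)) (snd (snd z)))"
    "continuous_on UNIV (\<lambda>z. g (fst z) (fst (snd z)) (snd (snd z)))"
  thus "continuous_on UNIV (\<lambda>z. f (fst z) (fst (snd z)) (snd (snd z)) + g (fst z) (fst (snd z)) (snd (snd z)))"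
    by (intro continuous_intros)
  assume "\<forall>a b c. f a b c \<noteq> 0 \<longrightarrow> norm (a, b, c) \<le> R1" "\<forall>a b c. g a b c \<noteq> 0 \<longrightarrow> norm (a, b, c) \<le> R2"
  thus "\<exists>R. \<forall>a b c. f a b c + g a b c \<noteq> 0 \<longrightarrow> norm (a, b, c) \<le> R"
    by (intro exI[of _ "max R1 R2"]) (metis add.right_neutral add_0 max.coboundedI1 max.coboundedI2)
qed

lemma cc_fun_scaleR_fun:
  "cc_fun f \<Longrightarrow> continuous_on UNIV h \<Longrightarrow> cc_fun (\<lambda>a b c. h (a, b, c) *\<^sub>R f a b c)"
  unfolding cc_fun_def
proof (elim conjE exE, intro conjI)
  assume "continuous_on UNIV (\<lambda>z. f (fst z) (fst (snd z)) (snd (snd z)))" "continuous_on UNIV h"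
  thus "continuous_on UNIV (\<lambda>z. h (fst z, fst (snd z), snd (snd z)) *\<^sub>R f (fst z) (fst (snd z)) (snd (snd z)))"
    by (simp add: continuous_intros)
  fix R assume "\<forall>a b c. f a b c \<noteq> 0 \<longrightarrow> norm (a, b, c) \<le> R"
  thus "\<exists>R. \<forall>a b c. h (a, b, c) *\<^sub>R f a b c \<noteq> 0 \<longrightarrow> norm (a, b, c) \<le> R" by auto
qed

lemma cc_fun_inner: "cc_fun f \<Longrightarrow> cc_fun g \<Longrightarrow> cc_fun (\<lambda>a b c. inner (f a b c) (g a b c))"
  unfolding cc_fun_def
proof (elim conjE exE, intro conjI)
  assume "continuous_on UNIV (\<lambda>z. f (fst z) (fst (snd z)) (snd (snd z)))"
    "continuous_on UNIV (\<lambda>z. g (fst z) (fst (snd z)) (snd (snd z)))"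
  thus "continuous_on UNIV (\<lambda>z. inner (f (fst z) (fst (snd z)) (snd (snd z))) (g (fst z) (fst (snd z)) (snd (snd z))))"
    by (intro continuous_intros)
  fix R assume "\<forall>a b c. f a b c \<noteq> 0 \<longrightarrow> norm (a, b, c) \<le> R"
  thus "\<exists>R. \<forall>a b c. inner (f a b c) (g a b c) \<noteq> 0 \<longrightarrow> norm (a, b, c) \<le> R"
    by (intro exI[of _ R]) (metis inner_zero_left)
qed

lemma cc_fun_scaleR: "cc_fun f \<Longrightarrow> cc_fun (\<lambda>a b c. k *\<^sub>R f a b c)"
  using cc_fun_scaleR_fun[of f "\<lambda>_. k"] by (simp add: continuous_intros)

lemma cc_fun_mult: "cc_fun f \<Longrightarrow> cc_fun (\<lambda>a b c. k * (f a b c :: real))"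
  using cc_fun_scaleR[of f k] by simp

lemma cc_fun_minus: "cc_fun f \<Longrightarrow> cc_fun (\<lambda>a b c. - f a b c)"
  using cc_fun_scaleR[of f "-1"] by simp

lemma cc_fun_diff: "cc_fun f \<Longrightarrow> cc_fun g \<Longrightarrow> cc_fun (\<lambda>a b c. f a b c - g a b c)"
  using cc_fun_add[of f "\<lambda>a b c. - g a b c"] cc_fun_minus[of g] by simp

lemma cc_fun_exp_weight: "cc_fun f \<Longrightarrow> cc_fun (\<lambda>a b c. exp (L * (a - al)) *\<^sub>R f a b c)"
  using cc_fun_scaleR_fun[of f "\<lambda>z. exp (L * (fst z - al))"] by (simp add: continuous_intros)

lemma cc_fun_potential: "cc_fun f \<Longrightarrow> cc_fun (\<lambda>a b c. (k * (b * \<xi>)\<^sup>2) *\<^sub>R f a b c)"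
  using cc_fun_scaleR_fun[of f "\<lambda>z. k * (fst (snd z) * \<xi>)\<^sup>2"] by (simp add: continuous_intros)

lemma cc_fun_potential_real: "cc_fun f \<Longrightarrow> cc_fun (\<lambda>a b c. (k * (b * \<xi>)\<^sup>2) * (f a b c :: real))"
  using cc_fun_potential[of f] by simp

lemma cc_fun_potential_density: "cc_fun f \<Longrightarrow> cc_fun (\<lambda>a b c. (b * \<xi>)\<^sup>2 * (f a b c :: real))"
  using cc_fun_potential_real[of f 1 \<xi>] by simp

lemmas cc_fun_intros = cc_fun_add cc_fun_diff cc_fun_minus cc_fun_scaleR cc_fun_mult cc_fun_inner
  cc_fun_exp_weight cc_fun_potential cc_fun_potential_real

lemma half_int_add:
  fixes f g :: "real \<Rightarrow> real \<Rightarrow> 'a::euclidean_space \<Rightarrow> real"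
  assumes "cc_fun f" "cc_fun g"
  shows "half_int (\<lambda>a b c. f a b c + g a b c) = half_int f + half_int g"
  using half_int_as_integral[OF assms(1)] half_int_as_integral[OF assms(2)]
    half_int_as_integral[OF cc_fun_add[OF assms]]
  by (simp add: distrib_left)

lemma half_int_mult: "half_int (\<lambda>a b c. k * f a b c) = k * half_int f"
  by (simp add: half_int_def)

lemma half_int_diff:
  fixes f g :: "real \<Rightarrow> real \<Rightarrow> 'a::euclidean_space \<Rightarrow> real"
  assumes "cc_fun f" "cc_fun g"
  shows "half_int (\<lambda>a b c. f a b c - g a b c) = half_int f - half_int g"
  using half_int_add[OF assms(1) cc_fun_mult[OF assms(2), of "-1"]] half_int_mult[of "-1" g] by simp

lemma half_int_mono:
  fixes f g :: "real \<Rightarrow> real \<Rightarrow> 'a::euclidean_space \<Rightarrow> real"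
  assumes "cc_fun f" "cc_fun g" "\<And>a b c. f a b c \<le> g a b c"
  shows "half_int f \<le> half_int g"
  unfolding half_int_as_integral(2)[OF assms(1)] half_int_as_integral(2)[OF assms(2)]
  by (rule integral_mono[OF half_int_as_integral(1)[OF assms(1)] half_int_as_integral(1)[OF assms(2)]])
    (auto simp: indicator_def assms(3))

lemma half_int_nonneg: "(\<And>a b c. 0 \<le> f a b c) \<Longrightarrow> 0 \<le> half_int f"
  unfolding half_int_def set_lebesgue_integral_def
  by (auto intro!: integral_nonneg_AE AE_I2 mult_nonneg_nonneg)

lemma slice_int_add:
  fixes f g :: "real \<Rightarrow> real \<Rightarrow> 'a::euclidean_space \<Rightarrow> real"
  assumes "cc_fun f" "cc_fun g"
  shows "slice_int (\<lambda>b c. f x b c + g x b c) = slice_int (f x) + slice_int (g x)"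
  unfolding slice_int_def using cc_fun_integrable(2)[OF assms(1)] cc_fun_integrable(2)[OF assms(2)]
  by simp

lemma slice_int_mult: "slice_int (\<lambda>b c. k * f b c) = k * slice_int f"
  by (simp add: slice_int_def)

lemma slice_int_mono:
  fixes f g :: "real \<Rightarrow> real \<Rightarrow> 'a::euclidean_space \<Rightarrow> real"
  assumes "cc_fun f" "cc_fun g" "\<And>b c. f x b c \<le> g x b c"
  shows "slice_int (f x) \<le> slice_int (g x)"
  unfolding slice_int_def
  by (rule integral_mono[OF cc_fun_integrable(2)[OF assms(1)] cc_fun_integrable(2)[OF assms(2)]])
    (simp add: assms(3))

lemma slice_int_nonneg: "(\<And>b c. 0 \<le> f b c) \<Longrightarrow> 0 \<le> slice_int f"
  unfolding slice_int_def by (auto intro!: integral_nonneg_AE)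

lemma half_int_lincomb4:
  fixes f1 f2 f3 f4 :: "real \<Rightarrow> real \<Rightarrow> 'a::euclidean_space \<Rightarrow> real"
  assumes "cc_fun f1" "cc_fun f2" "cc_fun f3" "cc_fun f4"
  shows "half_int (\<lambda>a b c. k1 * f1 a b c + k2 * f2 a b c + k3 * f3 a b c + k4 * f4 a b c)
    = k1 * half_int f1 + k2 * half_int f2 + k3 * half_int f3 + k4 * half_int f4"
  using assms by (simp add: half_int_add half_int_mult cc_fun_intros)

lemma integral_Ioi_derivative_bounded_support:
  fixes F f :: "real \<Rightarrow> real"
  assumes deriv: "\<And>x. (F has_real_derivative f x) (at x)" and cont: "continuous_on UNIV f"
    and supp: "\<And>x. f x \<noteq> 0 \<Longrightarrow> \<bar>x\<bar> \<le> R" "\<And>x. F x \<noteq> 0 \<Longrightarrow> \<bar>x\<bar> \<le> R"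
  shows "(\<integral>x. indicator {0<..} x * f x \<partial>lborel) = - F 0"
proof -
  define R' where "R' = max R 0 + 1"
  have [measurable]: "f \<in> borel_measurable borel" using cont by (rule borel_measurable_continuous_onI)
  have "(\<integral>x. indicator {0<..} x * f x \<partial>lborel) = (\<integral>x. f x * indicator {0..R'} x \<partial>lborel)"
  proof (rule integral_cong_AE)
    show "AE x in lborel. indicator {0<..} x * f x = f x * indicator {0..R'} x"
      using AE_lborel_singleton[of 0]
    proof eventually_elim
      case (elim x)
      show ?case
      proof (cases "x > R'")
        case True
        hence "f x = 0" using supp(1)[of x] by (force simp: R'_def)
        thus ?thesis using True by (auto simp: R'_def indicator_def)
      qed (use elim in \<open>auto simp: indicator_def\<close>)
    qed
  qed auto
  also have "\<dots> = F R' - F 0"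
    by (rule integral_FTC_Icc_real) (auto simp: R'_def deriv intro: continuous_on_interior[OF cont])
  also have "F R' = 0" using supp(2)[of R'] by (force simp: R'_def)
  finally show ?thesis by simp
qed

lemma integral_derivative_bounded_support:
  fixes F f :: "real \<Rightarrow> real"
  assumes deriv: "\<And>x. (F has_real_derivative f x) (at x)" and cont: "continuous_on UNIV f"
    and supp: "\<And>x. f x \<noteq> 0 \<Longrightarrow> \<bar>x\<bar> \<le> R" "\<And>x. F x \<noteq> 0 \<Longrightarrow> \<bar>x\<bar> \<le> R"
  shows "(\<integral>x. f x \<partial>lborel) = 0"
proof -
  define R' where "R' = max R 0 + 1"
  have "(\<integral>x. f x \<partial>lborel) = (\<integral>x. f x * indicator {-R'..R'} x \<partial>lborel)"
  proof (rule Bochner_Integration.integral_cong[OF refl])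
    fix x show "f x = f x * indicator {-R'..R'} x"
      by (cases "f x = 0") (use supp(1)[of x] in \<open>auto simp: R'_def indicator_def\<close>)
  qed
  also have "\<dots> = F R' - F (-R')"
    by (rule integral_FTC_Icc_real) (auto simp: R'_def deriv intro: continuous_on_interior[OF cont])
  also have "F R' = 0" using supp(2)[of R'] by (force simp: R'_def)
  also have "F (-R') = 0" using supp(2)[of "-R'"] by (force simp: R'_def)
  finally show ?thesis by simp
qed

lemma half_int_x0_derivative:
  fixes G G0 :: "real \<Rightarrow> real \<Rightarrow> 'a::euclidean_space \<Rightarrow> real"
  assumes "cc_fun G" "cc_fun G0"
    and deriv: "\<And>a b c. ((\<lambda>t. G t b c) has_real_derivative G0 a b c) (at a)"
  shows "half_int G0 = - slice_int (G 0)"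
proof -
  obtain R1 where R1: "\<And>a b c. G a b c \<noteq> 0 \<Longrightarrow> \<bar>a\<bar> \<le> R1" using cc_fun_bound[OF assms(1)] by metis
  obtain R2 where R2: "\<And>a b c. G0 a b c \<noteq> 0 \<Longrightarrow> \<bar>a\<bar> \<le> R2" using cc_fun_bound[OF assms(2)] by metis
  have ig: "integrable (lborel \<Otimes>\<^sub>M lborel) (\<lambda>(x0, p). indicator {0<..} x0 * G0 x0 (fst p) (snd p))"
    using half_int_as_integral(1)[OF assms(2)] by (simp add: lborel_prod split_beta')
  have "half_int G0 = integral\<^sup>L (lborel \<Otimes>\<^sub>M lborel) (\<lambda>(x0, p). indicator {0<..} x0 * G0 x0 (fst p) (snd p))"
    unfolding half_int_as_integral(2)[OF assms(2)] by (simp add: lborel_prod split_beta')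
  also have "\<dots> = (\<integral>p. (\<integral>x0. indicator {0<..} x0 * G0 x0 (fst p) (snd p) \<partial>lborel) \<partial>lborel)"
    by (rule lborel_pair.integral_snd[OF ig, symmetric])
  also have "\<dots> = (\<integral>p. - G 0 (fst p) (snd p) \<partial>lborel)"
  proof (intro Bochner_Integration.integral_cong refl)
    fix p :: "real \<times> 'a"
    show "(\<integral>x0. indicator {0<..} x0 * G0 x0 (fst p) (snd p) \<partial>lborel) = - G 0 (fst p) (snd p)"
    proof (rule integral_Ioi_derivative_bounded_support[of _ _ "max R1 R2"])
      fix x
      show "((\<lambda>t. G t (fst p) (snd p)) has_real_derivative G0 x (fst p) (snd p)) (at x)" by (rule deriv)
      show "\<bar>x\<bar> \<le> max R1 R2" if "G0 x (fst p) (snd p) \<noteq> 0" using R2[OF that] by linarith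
      show "\<bar>x\<bar> \<le> max R1 R2" if "G x (fst p) (snd p) \<noteq> 0" using R1[OF that] by linarith
    qed (rule cc_fun_continuous(2)[OF assms(2)])
  qed
  finally show ?thesis by (simp add: slice_int_def)
qed

lemma half_int_x1_derivative:
  fixes G G1 :: "real \<Rightarrow> real \<Rightarrow> 'a::euclidean_space \<Rightarrow> real"
  assumes "cc_fun G" "cc_fun G1"
    and deriv: "\<And>a b c. ((\<lambda>t. G a t c) has_real_derivative G1 a b c) (at b)"
  shows "half_int G1 = 0"
proof -
  obtain R1 where R1: "\<And>a b c. G a b c \<noteq> 0 \<Longrightarrow> \<bar>b\<bar> \<le> R1" using cc_fun_bound[OF assms(1)] by metis
  obtain R2 where R2: "\<And>a b c. G1 a b c \<noteq> 0 \<Longrightarrow> \<bar>b\<bar> \<le> R2" using cc_fun_bound[OF assms(2)] by metis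
  have "(LINT p|lborel. G1 x0 (fst p) (snd p)) = 0" for x0
  proof -
    have ig: "integrable (lborel \<Otimes>\<^sub>M lborel) (\<lambda>(b, c). G1 x0 b c)"
      using cc_fun_integrable(2)[OF assms(2), of x0] by (simp add: lborel_prod split_beta')
    have "(LINT p|lborel. G1 x0 (fst p) (snd p)) = integral\<^sup>L (lborel \<Otimes>\<^sub>M lborel) (\<lambda>(b, c). G1 x0 b c)"
      by (simp add: lborel_prod split_beta')
    also have "\<dots> = (\<integral>c. (\<integral>b. G1 x0 b c \<partial>lborel) \<partial>lborel)"
      by (rule lborel_pair.integral_snd[OF ig, symmetric])
    also have "\<dots> = 0"
    proof -
      have "(\<integral>b. G1 x0 b c \<partial>lborel) = 0" for c :: 'a
      proof (rule integral_derivative_bounded_support[of _ _ "max R1 R2"])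
        fix x
        show "((\<lambda>t. G x0 t c) has_real_derivative G1 x0 x c) (at x)" by (rule deriv)
        show "\<bar>x\<bar> \<le> max R1 R2" if "G1 x0 x c \<noteq> 0" using R2[OF that] by linarith
        show "\<bar>x\<bar> \<le> max R1 R2" if "G x0 x c \<noteq> 0" using R1[OF that] by linarith
      qed (rule cc_fun_continuous(3)[OF assms(2)])
      thus ?thesis by simp
    qed
    finally show ?thesis .
  qed
  thus ?thesis by (simp add: half_int_def)
qed

lemma inner_le_weighted_squares:
  fixes x y :: "'b::real_inner"
  assumes "k > 0"
  shows "inner x y \<le> inner x x / (2 * k) + k / 2 * inner y y"
proof -
  have "0 \<le> inner (x - k *\<^sub>R y) (x - k *\<^sub>R y)" by simp
  also have "\<dots> = inner x x - 2 * k * inner x y + k\<^sup>2 * inner y y"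
    by (simp add: inner_diff_left inner_diff_right inner_commute power2_eq_square algebra_simps)
  finally have "2 * k * inner x y \<le> inner x x + k\<^sup>2 * inner y y" by simp
  thus ?thesis using assms by (simp add: field_simps power2_eq_square)
qed

lemma inner_diff_self_le:
  fixes x y :: "'b::real_inner"
  shows "inner (x - y) (x - y) \<le> 2 * inner x x + 2 * inner y y"
proof -
  have "0 \<le> inner (x + y) (x + y)" by simp
  thus ?thesis by (simp add: inner_diff_left inner_diff_right inner_add_left inner_add_right inner_commute)
qed

lemma has_real_derivative_inner:
  assumes "(f has_vector_derivative f') (at x)" "(g has_vector_derivative g') (at x)"
  shows "((\<lambda>t. inner (f t) (g t)) has_real_derivative (inner f' (g x) + inner (f x) g')) (at x)"
  using bounded_bilinear.has_vector_derivative[OF bounded_bilinear_inner assms]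
  unfolding has_real_derivative_iff_has_vector_derivative by (simp add: add.commute)

text \<open>This is all the regularity the energy method uses.\<close>
locale cc_second_order =
  fixes v v0 v00 v1 v11 v01 :: "real \<Rightarrow> real \<Rightarrow> 'a::euclidean_space \<Rightarrow> 'b::real_inner"
  assumes cc: "cc_fun v" "cc_fun v0" "cc_fun v00" "cc_fun v1" "cc_fun v11" "cc_fun v01"
    and d0: "\<And>a b c. ((\<lambda>t. v t b c) has_vector_derivative v0 a b c) (at a)"
    and d00: "\<And>a b c. ((\<lambda>t. v0 t b c) has_vector_derivative v00 a b c) (at a)"
    and d1: "\<And>a b c. ((\<lambda>t. v a t c) has_vector_derivative v1 a b c) (at b)"
    and d11: "\<And>a b c. ((\<lambda>t. v1 a t c) has_vector_derivative v11 a b c) (at b)"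
    and d10: "\<And>a b c. ((\<lambda>t. v1 t b c) has_vector_derivative v01 a b c) (at a)"
    and d01: "\<And>a b c. ((\<lambda>t. v0 a t c) has_vector_derivative v01 a b c) (at b)"
begin

text \<open>The operator \<open>M = D0\<^sup>2 - \<theta> (D1\<^sup>2 + x1\<^sup>2 \<xi>\<^sup>2)\<close> written with real derivatives, its part
  \<open>M - L\<^sup>2\<close> (which is the symmetric part of the conjugated operator), and the energy density.\<close>
definition Mv :: "real \<Rightarrow> real \<Rightarrow> real \<Rightarrow> real \<Rightarrow> 'a \<Rightarrow> 'b" where
  "Mv \<theta> \<xi> a b c = - v00 a b c + \<theta> *\<^sub>R v11 a b c - (\<theta> * (b * \<xi>)\<^sup>2) *\<^sub>R v a b c"

definition sym_part :: "real \<Rightarrow> real \<Rightarrow> real \<Rightarrow> real \<Rightarrow> real \<Rightarrow> 'a \<Rightarrow> 'b" where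
  "sym_part \<theta> L \<xi> a b c = Mv \<theta> \<xi> a b c - L\<^sup>2 *\<^sub>R v a b c"

definition energy :: "real \<Rightarrow> real \<Rightarrow> real \<Rightarrow> real \<Rightarrow> real \<Rightarrow> 'a \<Rightarrow> real" where
  "energy \<theta> L \<xi> a b c = inner (v0 a b c) (v0 a b c) + L\<^sup>2 * inner (v a b c) (v a b c)
     + \<theta> * inner (v1 a b c) (v1 a b c) + (\<theta> * (b * \<xi>)\<^sup>2) * inner (v a b c) (v a b c)"

lemma cc_Mv: "cc_fun (Mv \<theta> \<xi>)"
  unfolding Mv_def[abs_def] by (intro cc_fun_intros cc)

lemma cc_sym_part: "cc_fun (sym_part \<theta> L \<xi>)"
  unfolding sym_part_def[abs_def] by (intro cc_fun_intros cc cc_Mv)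

lemma cc_energy: "cc_fun (energy \<theta> L \<xi>)"
  unfolding energy_def[abs_def] by (intro cc_fun_intros cc)

lemma energy_nonneg: "\<theta> \<ge> 0 \<Longrightarrow> 0 \<le> energy \<theta> L \<xi> a b c"
  unfolding energy_def by simp

text \<open>The first energy identity: expanding \<open>|A + 2L v0|\<^sup>2\<close> with \<open>A = M - L\<^sup>2\<close>, the cross term is
  \<open>-2L \<partial>0 energy + 4L\<theta> \<partial>1 \<langle>v1, v0\<rangle>\<close>, which integrates to the boundary energy at \<open>x0 = 0\<close>.\<close>
lemma energy_identity:
  "half_int (\<lambda>a b c. inner (sym_part \<theta> L \<xi> a b c + (2 * L) *\<^sub>R v0 a b c) (sym_part \<theta> L \<xi> a b c + (2 * L) *\<^sub>R v0 a b c))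
   = half_int (\<lambda>a b c. inner (sym_part \<theta> L \<xi> a b c) (sym_part \<theta> L \<xi> a b c))
     + 4 * L\<^sup>2 * half_int (\<lambda>a b c. inner (v0 a b c) (v0 a b c))
     + 2 * L * slice_int (energy \<theta> L \<xi> 0)"
proof -
  define A where "A = sym_part \<theta> L \<xi>"
  define energy' where "energy' = (\<lambda>a b c. 2 * inner (v00 a b c) (v0 a b c)
     + (2 * L\<^sup>2) * inner (v0 a b c) (v a b c) + (2 * \<theta>) * inner (v01 a b c) (v1 a b c)
     + 2 * ((\<theta> * (b * \<xi>)\<^sup>2) * inner (v0 a b c) (v a b c)))"
  define flux where "flux = (\<lambda>a b c. inner (v1 a b c) (v0 a b c))"
  define flux' where "flux' = (\<lambda>a b c. inner (v11 a b c) (v0 a b c) + inner (v1 a b c) (v01 a b c))"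
  have cc_aux: "cc_fun energy'" "cc_fun flux" "cc_fun flux'" "cc_fun A"
    unfolding energy'_def flux_def flux'_def A_def by (intro cc_fun_intros cc cc_sym_part)+
  have "((\<lambda>t. energy \<theta> L \<xi> t b c) has_real_derivative energy' a b c) (at a)" for a b c
  proof -
    have "((\<lambda>t. energy \<theta> L \<xi> t b c) has_real_derivative
      (inner (v00 a b c) (v0 a b c) + inner (v0 a b c) (v00 a b c))
      + L\<^sup>2 * (inner (v0 a b c) (v a b c) + inner (v a b c) (v0 a b c))
      + \<theta> * (inner (v01 a b c) (v1 a b c) + inner (v1 a b c) (v01 a b c))
      + (\<theta> * (b * \<xi>)\<^sup>2) * (inner (v0 a b c) (v a b c) + inner (v a b c) (v0 a b c))) (at a)"
      unfolding energy_def by (intro DERIV_add DERIV_cmult has_real_derivative_inner d0 d00 d10)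
    thus ?thesis unfolding energy'_def by (simp add: inner_commute algebra_simps)
  qed
  hence boundary: "half_int energy' = - slice_int (energy \<theta> L \<xi> 0)"
    by (rule half_int_x0_derivative[OF cc_energy cc_aux(1)])
  have "((\<lambda>t. flux a t c) has_real_derivative flux' a b c) (at b)" for a b c
    unfolding flux_def flux'_def by (rule has_real_derivative_inner[OF d11 d01])
  hence no_flux: "half_int flux' = 0"
    by (rule half_int_x1_derivative[OF cc_aux(2,3)])
  have expand: "inner (A a b c + (2 * L) *\<^sub>R v0 a b c) (A a b c + (2 * L) *\<^sub>R v0 a b c)
     = inner (A a b c) (A a b c) + (4 * L\<^sup>2) * inner (v0 a b c) (v0 a b c)
       + (- 2 * L) * energy' a b c + (4 * L * \<theta>) * flux' a b c" for a b c
  proof -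
    have A_v0: "inner (A a b c) (v0 a b c) = - inner (v00 a b c) (v0 a b c) - L\<^sup>2 * inner (v a b c) (v0 a b c)
       + \<theta> * inner (v11 a b c) (v0 a b c) - (\<theta> * (b * \<xi>)\<^sup>2) * inner (v a b c) (v0 a b c)"
      unfolding A_def sym_part_def Mv_def by (simp add: inner_diff_left inner_add_left)
    show ?thesis unfolding energy'_def flux'_def
      by (simp add: A_v0 inner_add_left inner_add_right inner_commute algebra_simps power2_eq_square)
  qed
  show ?thesis
    unfolding A_def[symmetric] expand
    by (simp add: half_int_add half_int_diff half_int_mult cc_fun_intros cc cc_aux boundary no_flux)
qed

lemma pairing_identity:
  "half_int (\<lambda>a b c. inner (sym_part \<theta> L \<xi> a b c) (v a b c))
   = slice_int (\<lambda>b c. inner (v0 0 b c) (v 0 b c))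
     + half_int (\<lambda>a b c. inner (v0 a b c) (v0 a b c))
     - L\<^sup>2 * half_int (\<lambda>a b c. inner (v a b c) (v a b c))
     - \<theta> * half_int (\<lambda>a b c. inner (v1 a b c) (v1 a b c))
     - half_int (\<lambda>a b c. (\<theta> * (b * \<xi>)\<^sup>2) * inner (v a b c) (v a b c))"
proof -
  define S where "S = (\<lambda>a b c. inner (v0 a b c) (v a b c))"
  define S' where "S' = (\<lambda>a b c. inner (v00 a b c) (v a b c) + inner (v0 a b c) (v0 a b c))"
  define T where "T = (\<lambda>a b c. inner (v1 a b c) (v a b c))"
  define T' where "T' = (\<lambda>a b c. inner (v11 a b c) (v a b c) + inner (v1 a b c) (v1 a b c))"
  have cc_aux: "cc_fun S" "cc_fun S'" "cc_fun T" "cc_fun T'"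
    unfolding S_def S'_def T_def T'_def by (intro cc_fun_intros cc)+
  have "((\<lambda>t. S t b c) has_real_derivative S' a b c) (at a)" for a b c
    unfolding S_def S'_def by (rule has_real_derivative_inner[OF d00 d0])
  hence boundary: "half_int S' = - slice_int (S 0)"
    by (rule half_int_x0_derivative[OF cc_aux(1,2)])
  have "((\<lambda>t. T a t c) has_real_derivative T' a b c) (at b)" for a b c
    unfolding T_def T'_def by (rule has_real_derivative_inner[OF d11 d1])
  hence no_flux: "half_int T' = 0"
    by (rule half_int_x1_derivative[OF cc_aux(3,4)])
  have expand: "inner (sym_part \<theta> L \<xi> a b c) (v a b c) = (- 1) * S' a b c + inner (v0 a b c) (v0 a b c)
     - L\<^sup>2 * inner (v a b c) (v a b c) + \<theta> * T' a b c - \<theta> * inner (v1 a b c) (v1 a b c)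
     - (\<theta> * (b * \<xi>)\<^sup>2) * inner (v a b c) (v a b c)" for a b c
    unfolding sym_part_def Mv_def S'_def T'_def by (simp add: inner_diff_left inner_add_left algebra_simps)
  show ?thesis
    unfolding expand
    by (simp add: half_int_add half_int_diff half_int_mult cc_fun_intros cc cc_aux boundary no_flux S_def)
qed

lemma density_le_energy:
  assumes \<theta>: "\<theta> > 0"
  shows "2 * inner (v0 a b c) (v0 a b c) + 2 * L\<^sup>2 * inner (v a b c) (v a b c) + inner (v1 a b c) (v1 a b c)
           + (b * \<xi>)\<^sup>2 * inner (v a b c) (v a b c)
         \<le> (2 + 1 / \<theta>) * energy \<theta> L \<xi> a b c"
proof -
  define P where "P = inner (v0 a b c) (v0 a b c) + L\<^sup>2 * inner (v a b c) (v a b c)"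
  define Q where "Q = inner (v1 a b c) (v1 a b c) + (b * \<xi>)\<^sup>2 * inner (v a b c) (v a b c)"
  have PQ: "P \<ge> 0" "Q \<ge> 0" unfolding P_def Q_def by auto
  have "(2 + 1 / \<theta>) * energy \<theta> L \<xi> a b c = (2 + 1 / \<theta>) * P + (2 * \<theta> + 1) * Q"
    using \<theta> unfolding energy_def P_def Q_def by (simp add: field_simps)
  moreover have "2 * P \<le> (2 + 1 / \<theta>) * P" using \<theta> PQ by (intro mult_right_mono) auto
  moreover have "Q \<le> (2 * \<theta> + 1) * Q" using \<theta> PQ by (simp add: mult_le_cancel_right1)
  ultimately show ?thesis unfolding P_def Q_def by (simp add: algebra_simps)
qed

lemma pairing_interior_bound:
  assumes L: "L > 0"
  shows "- half_int (\<lambda>a b c. inner (sym_part \<theta> L \<xi> a b c) (v a b c))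
         \<le> half_int (\<lambda>a b c. inner (sym_part \<theta> L \<xi> a b c) (sym_part \<theta> L \<xi> a b c)) / (2 * L\<^sup>2)
           + L\<^sup>2 / 2 * half_int (\<lambda>a b c. inner (v a b c) (v a b c))"
proof -
  define A where "A = sym_part \<theta> L \<xi>"
  have cc_A: "cc_fun A" unfolding A_def by (rule cc_sym_part)
  have "- half_int (\<lambda>a b c. inner (A a b c) (v a b c)) = half_int (\<lambda>a b c. inner (- A a b c) (v a b c))"
    using half_int_mult[of "-1" "\<lambda>a b c. inner (A a b c) (v a b c)"] by simp
  also have "\<dots> \<le> half_int (\<lambda>a b c. (1 / (2 * L\<^sup>2)) * inner (A a b c) (A a b c) + (L\<^sup>2 / 2) * inner (v a b c) (v a b c))"
  proof (rule half_int_mono)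
    fix a b c
    show "inner (- A a b c) (v a b c) \<le> (1 / (2 * L\<^sup>2)) * inner (A a b c) (A a b c) + (L\<^sup>2 / 2) * inner (v a b c) (v a b c)"
      using inner_le_weighted_squares[of "L\<^sup>2" "- A a b c" "v a b c"] L by simp
  qed (intro cc_fun_intros cc cc_A)+
  also have "\<dots> = half_int (\<lambda>a b c. inner (A a b c) (A a b c)) / (2 * L\<^sup>2)
      + L\<^sup>2 / 2 * half_int (\<lambda>a b c. inner (v a b c) (v a b c))"
    by (subst half_int_add) (intro cc_fun_intros cc cc_A, intro cc_fun_intros cc, simp only: half_int_mult, simp)
  finally show ?thesis unfolding A_def .
qed

lemma pairing_boundary_bound:
  assumes L: "L > 0" and \<theta>: "\<theta> \<ge> 0"
  shows "slice_int (\<lambda>b c. inner (v0 0 b c) (v 0 b c)) \<le> slice_int (energy \<theta> L \<xi> 0) / (2 * L)"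
proof -
  define F where "F = (\<lambda>a b c. inner (v0 a b c) (v a b c))"
  have "slice_int (F 0) \<le> slice_int ((\<lambda>a b c. (1 / (2 * L)) * energy \<theta> L \<xi> a b c) 0)"
  proof (rule slice_int_mono[of F _ 0])
    show "cc_fun F" unfolding F_def by (intro cc_fun_inner cc)
    show "cc_fun (\<lambda>a b c. (1 / (2 * L)) * energy \<theta> L \<xi> a b c)" by (rule cc_fun_mult[OF cc_energy])
    fix b c
    have "F 0 b c \<le> inner (v0 0 b c) (v0 0 b c) / (2 * L) + L / 2 * inner (v 0 b c) (v 0 b c)"
      unfolding F_def by (rule inner_le_weighted_squares[OF L])
    also have "\<dots> = (inner (v0 0 b c) (v0 0 b c) + L\<^sup>2 * inner (v 0 b c) (v 0 b c)) / (2 * L)"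
      using L by (simp add: field_simps power2_eq_square)
    also have "\<dots> \<le> energy \<theta> L \<xi> 0 b c / (2 * L)"
      using L \<theta> by (intro divide_right_mono) (auto simp: energy_def)
    finally show "F 0 b c \<le> (1 / (2 * L)) * energy \<theta> L \<xi> 0 b c" by simp
  qed
  thus ?thesis unfolding F_def slice_int_mult by simp
qed

text \<open>The Carleman estimate for the conjugated operator: \<open>\<integral>|A + 2L v0|\<^sup>2\<close> (with \<open>A = M - L\<^sup>2\<close>)
  controls the boundary energy, \<open>L\<^sup>2 \<integral>|v0|\<^sup>2\<close> (both from the first energy identity) and
  \<open>L\<^sup>4 \<integral>|v|\<^sup>2 + 2L\<^sup>2 \<theta> \<integral>(|v1|\<^sup>2 + (x1 \<xi>)\<^sup>2 |v|\<^sup>2)\<close> (from the pairing identity).\<close>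
lemma conjugated_estimate:
  fixes \<theta> L \<xi> :: real
  assumes \<theta>: "\<theta> > 0" and L: "L > 0"
  defines "LHS \<equiv> half_int (\<lambda>a b c. inner (sym_part \<theta> L \<xi> a b c + (2 * L) *\<^sub>R v0 a b c)
                                        (sym_part \<theta> L \<xi> a b c + (2 * L) *\<^sub>R v0 a b c))"
  shows "2 * L * slice_int (energy \<theta> L \<xi> 0) \<le> LHS"
    and "4 * L\<^sup>2 * half_int (\<lambda>a b c. inner (v0 a b c) (v0 a b c)) \<le> LHS"
    and "L ^ 4 * half_int (\<lambda>a b c. inner (v a b c) (v a b c))
         + 2 * L\<^sup>2 * \<theta> * half_int (\<lambda>a b c. inner (v1 a b c) (v1 a b c))
         + 2 * L\<^sup>2 * half_int (\<lambda>a b c. (\<theta> * (b * \<xi>)\<^sup>2) * inner (v a b c) (v a b c)) \<le> LHS"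
proof -
  define JA where "JA = half_int (\<lambda>a b c. inner (sym_part \<theta> L \<xi> a b c) (sym_part \<theta> L \<xi> a b c))"
  define J0 where "J0 = half_int (\<lambda>a b c. inner (v0 a b c) (v0 a b c))"
  define Jv where "Jv = half_int (\<lambda>a b c. inner (v a b c) (v a b c))"
  define J1 where "J1 = half_int (\<lambda>a b c. inner (v1 a b c) (v1 a b c))"
  define Jq where "Jq = half_int (\<lambda>a b c. (\<theta> * (b * \<xi>)\<^sup>2) * inner (v a b c) (v a b c))"
  define Bd where "Bd = slice_int (energy \<theta> L \<xi> 0)"
  have nonneg: "JA \<ge> 0" "J0 \<ge> 0" "Bd \<ge> 0"
    unfolding JA_def J0_def Bd_def using \<theta> by (auto intro!: half_int_nonneg slice_int_nonneg energy_nonneg)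
  have LHS: "LHS = JA + 4 * L\<^sup>2 * J0 + 2 * L * Bd"
    unfolding LHS_def JA_def J0_def Bd_def by (rule energy_identity)
  have "L\<^sup>2 * Jv / 2 + \<theta> * J1 + Jq \<le> Bd / (2 * L) + J0 + JA / (2 * L\<^sup>2)"
    using pairing_identity[of \<theta> L \<xi>] pairing_interior_bound[OF L, of \<theta> \<xi>]
      pairing_boundary_bound[OF L less_imp_le[OF \<theta>], of \<xi>]
    unfolding JA_def J0_def Jv_def J1_def Jq_def Bd_def by linarith
  hence "2 * L\<^sup>2 * (L\<^sup>2 * Jv / 2 + \<theta> * J1 + Jq) \<le> 2 * L\<^sup>2 * (Bd / (2 * L) + J0 + JA / (2 * L\<^sup>2))"
    using L by (intro mult_left_mono) auto
  also have "\<dots> = L * Bd + 2 * L\<^sup>2 * J0 + JA"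
    using L by (simp add: field_simps power2_eq_square)
  finally have "L ^ 4 * Jv + 2 * L\<^sup>2 * \<theta> * J1 + 2 * L\<^sup>2 * Jq \<le> L * Bd + 2 * L\<^sup>2 * J0 + JA"
    by (simp add: algebra_simps power2_eq_square power4_eq_xxxx)
  moreover have "L * Bd \<ge> 0" "L\<^sup>2 * J0 \<ge> 0" using L nonneg by auto
  ultimately show "L ^ 4 * Jv + 2 * L\<^sup>2 * \<theta> * J1 + 2 * L\<^sup>2 * Jq \<le> LHS"
    unfolding LHS by linarith
  show "2 * L * Bd \<le> LHS" "4 * L\<^sup>2 * J0 \<le> LHS" unfolding LHS using nonneg L by auto
qed

end

lemma carleman_arith:
  fixes LHS Bd J0 Jw J1 Jq W0 E1B E0B T2 T0 L \<theta> :: real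
  assumes L: "L > 0" and \<theta>: "\<theta> > 0"
    and nonneg: "J0 \<ge> 0" "Jw \<ge> 0" "J1 \<ge> 0" "Jq \<ge> 0" "Bd \<ge> 0"
    and Z1: "2 * L * Bd \<le> LHS" and Z2: "4 * L\<^sup>2 * J0 \<le> LHS"
    and Z3: "L ^ 4 * Jw + 2 * L\<^sup>2 * \<theta> * J1 + 2 * L\<^sup>2 * Jq \<le> LHS"
    and X1: "W0 * E1B \<le> (2 + 1 / \<theta>) * Bd"
    and X0: "W0 * E0B \<le> Bd / L\<^sup>2"
    and T2: "T2 \<le> 2 * J0 + 2 * L\<^sup>2 * Jw + J1 + (1 / \<theta>) * Jq"
    and T0: "T0 = Jw"
  shows "LHS \<ge> (1 / (8 + 2 / \<theta>)) * W0 * (L * E1B + L ^ 3 * (3 * E0B))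
       + (1 / (8 + 2 / \<theta>)) * L\<^sup>2 * T2 + (1 / (8 + 2 / \<theta>)) * L ^ 4 * (3 * T0)"
proof -
  define K where "K = 8 + 2 / \<theta>"
  have K: "K > 0" using \<theta> by (simp add: K_def add_pos_pos)
  have LHS_nonneg: "LHS \<ge> 0" using Z1 L nonneg by (smt (verit) mult_nonneg_nonneg)
  have b1: "L * (W0 * E1B) + L ^ 3 * (3 * (W0 * E0B)) \<le> (5 + 1 / \<theta>) * (LHS / 2)"
  proof -
    have "L * (W0 * E1B) \<le> L * ((2 + 1 / \<theta>) * Bd)" using X1 L by (intro mult_left_mono) auto
    moreover have "L ^ 3 * (3 * (W0 * E0B)) \<le> L ^ 3 * (3 * (Bd / L\<^sup>2))" using X0 L by (intro mult_left_mono) auto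
    moreover have "L ^ 3 * (3 * (Bd / L\<^sup>2)) = 3 * (L * Bd)" using L by (simp add: field_simps power2_eq_square power3_eq_cube)
    moreover have "(5 + 1 / \<theta>) * (L * Bd) \<le> (5 + 1 / \<theta>) * (LHS / 2)"
      using Z1 \<theta> by (intro mult_left_mono) (auto simp: add_nonneg_nonneg)
    ultimately show ?thesis by (simp add: algebra_simps)
  qed
  have b2: "L\<^sup>2 * T2 \<le> 2 * (L\<^sup>2 * J0) + 2 * (L ^ 4 * Jw) + (1 / (2 * \<theta>)) * (2 * L\<^sup>2 * \<theta> * J1 + 2 * L\<^sup>2 * Jq)"
  proof -
    have "L\<^sup>2 * T2 \<le> L\<^sup>2 * (2 * J0 + 2 * L\<^sup>2 * Jw + J1 + (1 / \<theta>) * Jq)" using T2 L by (intro mult_left_mono) auto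
    also have "\<dots> = 2 * (L\<^sup>2 * J0) + 2 * (L ^ 4 * Jw) + (1 / (2 * \<theta>)) * (2 * L\<^sup>2 * \<theta> * J1 + 2 * L\<^sup>2 * Jq)"
      using \<theta> by (simp add: field_simps power2_eq_square power4_eq_xxxx)
    finally show ?thesis .
  qed
  have parts: "L ^ 4 * Jw \<le> LHS" "2 * L\<^sup>2 * \<theta> * J1 + 2 * L\<^sup>2 * Jq \<le> LHS"
    using Z3 L \<theta> nonneg by (smt (verit) mult_nonneg_nonneg zero_le_power)+
  have "(1 / (2 * \<theta>)) * (2 * L\<^sup>2 * \<theta> * J1 + 2 * L\<^sup>2 * Jq) \<le> (1 / (2 * \<theta>)) * LHS"
    using parts(2) \<theta> by (intro mult_left_mono) auto
  hence "L * (W0 * E1B) + L ^ 3 * (3 * (W0 * E0B)) + L\<^sup>2 * T2 + L ^ 4 * (3 * T0)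
        \<le> (5 + 1 / \<theta>) * (LHS / 2) + (LHS / 2 + 2 * LHS + (1 / (2 * \<theta>)) * LHS) + 3 * LHS"
    using b1 b2 Z2 parts(1) T0 by (simp add: algebra_simps)
  also have "\<dots> = (8 + 1 / \<theta>) * LHS" using \<theta> by (simp add: field_simps)
  also have "\<dots> \<le> K * LHS"
    using \<theta> LHS_nonneg unfolding K_def by (intro mult_right_mono) (auto intro: divide_right_mono)
  finally have "(1 / K) * (L * (W0 * E1B) + L ^ 3 * (3 * (W0 * E0B)) + L\<^sup>2 * T2 + L ^ 4 * (3 * T0))
      \<le> (1 / K) * (K * LHS)"
    using K by (intro mult_left_mono) auto
  thus ?thesis using K unfolding K_def[symmetric] by (simp add: algebra_simps)
qed

locale exp_conjugation = cc_second_order v v0 v00 v1 v11 v01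
  for v v0 v00 v1 v11 v01 :: "real \<Rightarrow> real \<Rightarrow> 'a::euclidean_space \<Rightarrow> 'b::real_inner" +
  fixes L al :: real
begin

definition weight :: "real \<Rightarrow> real" where "weight a = exp (L * (a - al))"

definition w where "w a b c = weight a *\<^sub>R v a b c"

definition w0 where "w0 a b c = weight a *\<^sub>R (L *\<^sub>R v a b c + v0 a b c)"

definition w00 where "w00 a b c = weight a *\<^sub>R (L\<^sup>2 *\<^sub>R v a b c + (2 * L) *\<^sub>R v0 a b c + v00 a b c)"

definition w1 where "w1 a b c = weight a *\<^sub>R v1 a b c"

definition w11 where "w11 a b c = weight a *\<^sub>R v11 a b c"

definition w01 where "w01 a b c = weight a *\<^sub>R (L *\<^sub>R v1 a b c + v01 a b c)"

lemma weight_deriv: "(weight has_real_derivative L * weight a) (at a)"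
  unfolding weight_def by (auto intro!: derivative_eq_intros)

sublocale conj: cc_second_order w w0 w00 w1 w11 w01
proof
  show "cc_fun w" "cc_fun w0" "cc_fun w00" "cc_fun w1" "cc_fun w11" "cc_fun w01"
    unfolding w_def[abs_def] w0_def[abs_def] w00_def[abs_def] w1_def[abs_def] w11_def[abs_def]
      w01_def[abs_def] weight_def
    by (intro cc_fun_intros cc)+
  fix a b c
  show "((\<lambda>t. w t b c) has_vector_derivative w0 a b c) (at a)"
    unfolding w_def w0_def
    by (rule has_vector_derivative_eq_rhs[OF has_vector_derivative_scaleR[OF weight_deriv d0]])
      (simp add: algebra_simps)
  show "((\<lambda>t. w0 t b c) has_vector_derivative w00 a b c) (at a)"
    unfolding w0_def w00_def
    by (rule has_vector_derivative_eq_rhs[OF has_vector_derivative_scaleR[OF weight_deriv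
          has_vector_derivative_add[OF has_vector_derivative_scaleR[OF DERIV_const d0] d00]]])
      (simp add: algebra_simps power2_eq_square, simp add: scaleR_add_left[symmetric])
  show "((\<lambda>t. w1 t b c) has_vector_derivative w01 a b c) (at a)"
    unfolding w1_def w01_def
    by (rule has_vector_derivative_eq_rhs[OF has_vector_derivative_scaleR[OF weight_deriv d10]])
      (simp add: algebra_simps)
  show "((\<lambda>t. w a t c) has_vector_derivative w1 a b c) (at b)"
    unfolding w_def w1_def by (intro has_vector_derivative_scaleR[OF DERIV_const d1, simplified])
  show "((\<lambda>t. w1 a t c) has_vector_derivative w11 a b c) (at b)"
    unfolding w1_def w11_def by (intro has_vector_derivative_scaleR[OF DERIV_const d11, simplified])
  show "((\<lambda>t. w0 a t c) has_vector_derivative w01 a b c) (at b)"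
    unfolding w0_def w01_def
    by (rule has_vector_derivative_eq_rhs[OF has_vector_derivative_scaleR[OF DERIV_const
          has_vector_derivative_add[OF has_vector_derivative_scaleR[OF DERIV_const d1] d01]]])
      simp
qed

lemma weighted_Mv: "weight a *\<^sub>R Mv \<theta> \<xi> a b c = conj.sym_part \<theta> L \<xi> a b c + (2 * L) *\<^sub>R w0 a b c"
  unfolding conj.sym_part_def conj.Mv_def Mv_def w_def w0_def w00_def w11_def
  by (simp add: algebra_simps power2_eq_square, simp add: scaleR_add_left[symmetric])

lemma weighted_square: "(weight a)\<^sup>2 * inner (v a b c) (v a b c) = inner (w a b c) (w a b c)"
  unfolding w_def by (simp add: power2_eq_square)

text \<open>The unweighted energy density of \<open>v\<close>, multiplied by the weight, is dominated by that of
  \<open>w\<close>, because \<open>e v0 = w0 - L w\<close>.\<close>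
lemma weighted_density_le:
  "(weight a)\<^sup>2 * (inner (v0 a b c) (v0 a b c) + inner (v1 a b c) (v1 a b c) + (b * \<xi>)\<^sup>2 * inner (v a b c) (v a b c))
   \<le> 2 * inner (w0 a b c) (w0 a b c) + 2 * L\<^sup>2 * inner (w a b c) (w a b c) + inner (w1 a b c) (w1 a b c)
     + (b * \<xi>)\<^sup>2 * inner (w a b c) (w a b c)"
proof -
  have "weight a *\<^sub>R v0 a b c = w0 a b c - L *\<^sub>R w a b c"
    unfolding w0_def w_def by (simp add: algebra_simps)
  hence "(weight a)\<^sup>2 * inner (v0 a b c) (v0 a b c) = inner (w0 a b c - L *\<^sub>R w a b c) (w0 a b c - L *\<^sub>R w a b c)"
    by (simp add: power2_eq_square flip: \<open>weight a *\<^sub>R v0 a b c = _\<close>)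
  also have "\<dots> \<le> 2 * inner (w0 a b c) (w0 a b c) + 2 * L\<^sup>2 * inner (w a b c) (w a b c)"
    using inner_diff_self_le[of "w0 a b c" "L *\<^sub>R w a b c"] by (simp add: power2_eq_square)
  moreover have "(weight a)\<^sup>2 * inner (v1 a b c) (v1 a b c) = inner (w1 a b c) (w1 a b c)"
    unfolding w1_def by (simp add: power2_eq_square)
  moreover have "(weight a)\<^sup>2 * ((b * \<xi>)\<^sup>2 * inner (v a b c) (v a b c)) = (b * \<xi>)\<^sup>2 * inner (w a b c) (w a b c)"
    by (metis weighted_square mult.left_commute)
  ultimately show ?thesis by (simp only: distrib_left)
qed

lemma cc_fun_weighted: "cc_fun f \<Longrightarrow> cc_fun (\<lambda>a b c. (weight a)\<^sup>2 * (f a b c :: real))"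
  using cc_fun_scaleR_fun[of f "\<lambda>z. (weight (fst z))\<^sup>2"] by (simp add: weight_def continuous_intros)

lemma cc_fun_density:
  "cc_fun (\<lambda>a b c. inner (v0 a b c) (v0 a b c) + inner (v1 a b c) (v1 a b c) + (b * \<xi>)\<^sup>2 * inner (v a b c) (v a b c))"
  by (intro cc_fun_add cc_fun_inner cc_fun_potential_density cc)

lemma boundary_density_bound:
  assumes \<theta>: "\<theta> > 0"
  shows "(weight 0)\<^sup>2 * slice_int (\<lambda>b c. inner (v0 0 b c) (v0 0 b c) + inner (v1 0 b c) (v1 0 b c)
                                        + (b * \<xi>)\<^sup>2 * inner (v 0 b c) (v 0 b c))
         \<le> (2 + 1 / \<theta>) * slice_int (conj.energy \<theta> L \<xi> 0)"
proof -
  define F where "F = (\<lambda>a b c. (weight a)\<^sup>2 * (inner (v0 a b c) (v0 a b c) + inner (v1 a b c) (v1 a b c)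
                                        + (b * \<xi>)\<^sup>2 * inner (v a b c) (v a b c)))"
  have "slice_int (F 0) \<le> slice_int ((\<lambda>a b c. (2 + 1 / \<theta>) * conj.energy \<theta> L \<xi> a b c) 0)"
  proof (rule slice_int_mono[of F _ 0])
    show "cc_fun F" unfolding F_def by (rule cc_fun_weighted[OF cc_fun_density])
    show "cc_fun (\<lambda>a b c. (2 + 1 / \<theta>) * conj.energy \<theta> L \<xi> a b c)"
      by (rule cc_fun_mult[OF conj.cc_energy])
    fix b c
    show "F 0 b c \<le> (2 + 1 / \<theta>) * conj.energy \<theta> L \<xi> 0 b c"
      unfolding F_def
      using weighted_density_le[of 0 b c \<xi>] conj.density_le_energy[OF \<theta>, of 0 b c L \<xi>] by linarith
  qed
  thus ?thesis unfolding F_def slice_int_mult by simp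
qed

lemma boundary_mass_bound:
  assumes \<theta>: "\<theta> \<ge> 0" and L: "L > 0"
  shows "(weight 0)\<^sup>2 * slice_int (\<lambda>b c. inner (v 0 b c) (v 0 b c)) \<le> slice_int (conj.energy \<theta> L \<xi> 0) / L\<^sup>2"
proof -
  define F where "F = (\<lambda>a b c. inner (w a b c) (w a b c))"
  have "slice_int (F 0) \<le> slice_int ((\<lambda>a b c. (1 / L\<^sup>2) * conj.energy \<theta> L \<xi> a b c) 0)"
  proof (rule slice_int_mono[of F _ 0])
    show "cc_fun F" unfolding F_def by (intro cc_fun_inner conj.cc)
    show "cc_fun (\<lambda>a b c. (1 / L\<^sup>2) * conj.energy \<theta> L \<xi> a b c)"
      by (rule cc_fun_mult[OF conj.cc_energy])
    fix b c
    have "L\<^sup>2 * F 0 b c \<le> conj.energy \<theta> L \<xi> 0 b c"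
      using \<theta> unfolding conj.energy_def F_def by simp
    thus "F 0 b c \<le> (1 / L\<^sup>2) * conj.energy \<theta> L \<xi> 0 b c"
      using L by (simp add: field_simps)
  qed
  thus ?thesis unfolding F_def slice_int_mult weighted_square[symmetric] by simp
qed

lemma interior_density_bound:
  assumes \<theta>: "\<theta> > 0"
  shows "half_int (\<lambda>a b c. (weight a)\<^sup>2 * (inner (v0 a b c) (v0 a b c) + inner (v1 a b c) (v1 a b c)
                                        + (b * \<xi>)\<^sup>2 * inner (v a b c) (v a b c)))
         \<le> 2 * half_int (\<lambda>a b c. inner (w0 a b c) (w0 a b c))
           + 2 * L\<^sup>2 * half_int (\<lambda>a b c. inner (w a b c) (w a b c))
           + half_int (\<lambda>a b c. inner (w1 a b c) (w1 a b c))
           + (1 / \<theta>) * half_int (\<lambda>a b c. (\<theta> * (b * \<xi>)\<^sup>2) * inner (w a b c) (w a b c))"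
  (is "?lhs \<le> ?rhs")
proof -
  have "?lhs \<le> half_int (\<lambda>a b c. 2 * inner (w0 a b c) (w0 a b c) + (2 * L\<^sup>2) * inner (w a b c) (w a b c)
      + 1 * inner (w1 a b c) (w1 a b c) + (1 / \<theta>) * ((\<theta> * (b * \<xi>)\<^sup>2) * inner (w a b c) (w a b c)))"
  proof (rule half_int_mono)
    show "cc_fun (\<lambda>a b c. (weight a)\<^sup>2 * (inner (v0 a b c) (v0 a b c) + inner (v1 a b c) (v1 a b c)
                                        + (b * \<xi>)\<^sup>2 * inner (v a b c) (v a b c)))"
      by (rule cc_fun_weighted[OF cc_fun_density])
    show "cc_fun (\<lambda>a b c. 2 * inner (w0 a b c) (w0 a b c) + (2 * L\<^sup>2) * inner (w a b c) (w a b c)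
      + 1 * inner (w1 a b c) (w1 a b c) + (1 / \<theta>) * ((\<theta> * (b * \<xi>)\<^sup>2) * inner (w a b c) (w a b c)))"
      by (intro cc_fun_intros conj.cc)
    fix a b c
    show "(weight a)\<^sup>2 * (inner (v0 a b c) (v0 a b c) + inner (v1 a b c) (v1 a b c)
                                        + (b * \<xi>)\<^sup>2 * inner (v a b c) (v a b c))
      \<le> 2 * inner (w0 a b c) (w0 a b c) + (2 * L\<^sup>2) * inner (w a b c) (w a b c)
      + 1 * inner (w1 a b c) (w1 a b c) + (1 / \<theta>) * ((\<theta> * (b * \<xi>)\<^sup>2) * inner (w a b c) (w a b c))"
      using weighted_density_le[of a b c \<xi>] \<theta> by simp
  qed
  also have "\<dots> = ?rhs"
    by (subst half_int_lincomb4) (simp_all add: cc_fun_intros conj.cc)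
  finally show ?thesis .
qed

text \<open>The Carleman estimate for \<open>M\<close> with weight \<open>e\<^sup>2 = exp (2L (x0 - al))\<close>: all quantities are translated to the
  conjugated family \<open>w\<close>, where \<open>conjugated_estimate\<close> applies.  (The factor 3 matches the
  definition of \<open>E0\<close> as a sum of three equal norms.)\<close>
lemma carleman_estimate:
  fixes \<theta> \<xi> :: real
  assumes \<theta>: "\<theta> > 0" and L: "L > 0"
  defines "E1d \<equiv> \<lambda>a b c. inner (v0 a b c) (v0 a b c) + inner (v1 a b c) (v1 a b c)
                          + (b * \<xi>)\<^sup>2 * inner (v a b c) (v a b c)"
    and "E0d \<equiv> \<lambda>a b c. inner (v a b c) (v a b c)"
  shows "half_int (\<lambda>a b c. (weight a)\<^sup>2 * inner (Mv \<theta> \<xi> a b c) (Mv \<theta> \<xi> a b c))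
     \<ge> (1 / (8 + 2 / \<theta>)) * (weight 0)\<^sup>2 * (L * slice_int (E1d 0) + L ^ 3 * (3 * slice_int (E0d 0)))
       + (1 / (8 + 2 / \<theta>)) * L\<^sup>2 * half_int (\<lambda>a b c. (weight a)\<^sup>2 * E1d a b c)
       + (1 / (8 + 2 / \<theta>)) * L ^ 4 * (3 * half_int (\<lambda>a b c. (weight a)\<^sup>2 * E0d a b c))"
proof -
  have "(weight a)\<^sup>2 * inner (Mv \<theta> \<xi> a b c) (Mv \<theta> \<xi> a b c)
        = inner (weight a *\<^sub>R Mv \<theta> \<xi> a b c) (weight a *\<^sub>R Mv \<theta> \<xi> a b c)" for a b c
    by (simp add: power2_eq_square)
  hence LHS: "half_int (\<lambda>a b c. (weight a)\<^sup>2 * inner (Mv \<theta> \<xi> a b c) (Mv \<theta> \<xi> a b c))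
     = half_int (\<lambda>a b c. inner (conj.sym_part \<theta> L \<xi> a b c + (2 * L) *\<^sub>R w0 a b c)
                               (conj.sym_part \<theta> L \<xi> a b c + (2 * L) *\<^sub>R w0 a b c))"
    unfolding weighted_Mv by simp
  have nonneg: "half_int (\<lambda>a b c. inner (w0 a b c) (w0 a b c)) \<ge> 0"
    "half_int (\<lambda>a b c. inner (w a b c) (w a b c)) \<ge> 0"
    "half_int (\<lambda>a b c. inner (w1 a b c) (w1 a b c)) \<ge> 0"
    "half_int (\<lambda>a b c. (\<theta> * (b * \<xi>)\<^sup>2) * inner (w a b c) (w a b c)) \<ge> 0"
    "slice_int (conj.energy \<theta> L \<xi> 0) \<ge> 0"
    using \<theta> by (auto intro!: half_int_nonneg slice_int_nonneg conj.energy_nonneg)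
  have T0: "half_int (\<lambda>a b c. (weight a)\<^sup>2 * E0d a b c) = half_int (\<lambda>a b c. inner (w a b c) (w a b c))"
    unfolding E0d_def weighted_square ..
  show ?thesis
    unfolding LHS E1d_def E0d_def
    by (rule carleman_arith[OF L \<theta> nonneg conj.conjugated_estimate[OF \<theta> L]
          boundary_density_bound[OF \<theta>] boundary_mass_bound[OF less_imp_le[OF \<theta>] L]
          interior_density_bound[OF \<theta>] T0[unfolded E0d_def]])
qed

end

text \<open>Symmetry of mixed partial derivatives (Schwarz) for functions of two real variables, via
  differentiation under the integral sign.\<close>
lemma continuous_on_slice:
  assumes "continuous_on UNIV (\<lambda>z. g (fst z) (snd z))"
  shows "continuous_on UNIV (g s)"
  using continuous_on_compose_UNIV[OF assms, of "\<lambda>r. (s, r)"] by (simp add: continuous_intros)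

lemma mixed_partials_integrals_eq:
  fixes f fs ft fxy fyx :: "real \<Rightarrow> real \<Rightarrow> 'b::banach"
  assumes ds: "\<And>s t. ((\<lambda>s. f s t) has_vector_derivative fs s t) (at s)"
    and dt: "\<And>s t. ((\<lambda>t. f s t) has_vector_derivative ft s t) (at t)"
    and dst: "\<And>s t. ((\<lambda>t. fs s t) has_vector_derivative fxy s t) (at t)"
    and dts: "\<And>s t. ((\<lambda>s. ft s t) has_vector_derivative fyx s t) (at s)"
    and c_fyx: "continuous_on UNIV (\<lambda>z. fyx (fst z) (snd z))"
    and c_ft: "continuous_on UNIV (\<lambda>z. ft (fst z) (snd z))"
    and t: "t0 \<le> t"
  shows "integral {t0..t} (fyx s) = integral {t0..t} (fxy s)"
proof -
  have ftc: "integral {t0..t} (ft s') = f s' t - f s' t0" for s'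
    using fundamental_theorem_of_calculus[OF t, of "\<lambda>r. f s' r" "ft s'"] dt
    by (auto intro: has_vector_derivative_at_within integral_unique)
  have "((\<lambda>s'. integral (cbox t0 t) (ft s')) has_vector_derivative integral (cbox t0 t) (fyx s)) (at s within UNIV)"
  proof (rule leibniz_rule_vector_derivative)
    show "((\<lambda>x. ft x r) has_vector_derivative fyx x r) (at x within UNIV)" for x r by (simp add: dts)
    show "ft x integrable_on cbox t0 t" for x
      by (rule integrable_continuous) (rule continuous_on_subset[OF continuous_on_slice[OF c_ft]], simp)
    show "continuous_on (UNIV \<times> cbox t0 t) (\<lambda>(x, t). fyx x t)"
      using continuous_on_subset[OF c_fyx] by (simp add: split_beta')
  qed auto
  moreover have "((\<lambda>s'. f s' t - f s' t0) has_vector_derivative fs s t - fs s t0) (at s)"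
    by (intro has_vector_derivative_diff ds)
  ultimately have "integral {t0..t} (fyx s) = fs s t - fs s t0"
    using ftc by (auto intro: vector_derivative_unique_at)
  also have "\<dots> = integral {t0..t} (fxy s)"
    using fundamental_theorem_of_calculus[OF t, of "\<lambda>r. fs s r" "fxy s"] dst
    by (auto intro: has_vector_derivative_at_within integral_unique[symmetric])
  finally show ?thesis .
qed

lemma mixed_partials_symmetric:
  fixes f fs ft fxy fyx :: "real \<Rightarrow> real \<Rightarrow> 'b::banach"
  assumes ds: "\<And>s t. ((\<lambda>s. f s t) has_vector_derivative fs s t) (at s)"
    and dt: "\<And>s t. ((\<lambda>t. f s t) has_vector_derivative ft s t) (at t)"
    and dst: "\<And>s t. ((\<lambda>t. fs s t) has_vector_derivative fxy s t) (at t)"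
    and dts: "\<And>s t. ((\<lambda>s. ft s t) has_vector_derivative fyx s t) (at s)"
    and c_fyx: "continuous_on UNIV (\<lambda>z. fyx (fst z) (snd z))"
    and c_fxy: "continuous_on UNIV (\<lambda>z. fxy (fst z) (snd z))"
    and c_ft: "continuous_on UNIV (\<lambda>z. ft (fst z) (snd z))"
  shows "fxy s t = fyx s t"
proof -
  define t0 where "t0 = t - 1"
  have int: "t \<in> interior {t0..t+1}" unfolding t0_def by simp
  have "((\<lambda>r. integral {t0..r} (fyx s)) has_vector_derivative fyx s t) (at t within {t0..t+1})"
    by (rule integral_has_vector_derivative)
      (auto simp: t0_def intro: continuous_on_subset[OF continuous_on_slice[OF c_fyx]])
  hence yx: "((\<lambda>r. integral {t0..r} (fyx s)) has_vector_derivative fyx s t) (at t)"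
    using at_within_interior[OF int] by simp
  have "((\<lambda>r. integral {t0..r} (fxy s)) has_vector_derivative fxy s t) (at t within {t0..t+1})"
    by (rule integral_has_vector_derivative)
      (auto simp: t0_def intro: continuous_on_subset[OF continuous_on_slice[OF c_fxy]])
  hence "((\<lambda>r. integral {t0..r} (fxy s)) has_vector_derivative fxy s t) (at t)"
    using at_within_interior[OF int] by simp
  hence xy: "((\<lambda>r. integral {t0..r} (fyx s)) has_vector_derivative fxy s t) (at t)"
    by (rule has_vector_derivative_transform_within_open[of _ _ _ "{t0<..}"])
      (auto simp: t0_def intro!: mixed_partials_integrals_eq[OF ds dt dst dts c_fyx c_ft, symmetric])
  show ?thesis using vector_derivative_unique_at[OF yx xy] by simp
qed

inductive_cases iter_partial_nilE: "iter_partial f [] g"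
inductive_cases iter_partial_consE: "iter_partial f (v # vs) g"

lemma iter_partial_unique: "iter_partial f vs g \<Longrightarrow> iter_partial f vs h \<Longrightarrow> g = h"
proof (induction arbitrary: h rule: iter_partial.induct)
  case (ip_nil f) thus ?case by (rule iter_partial_nilE) simp
next
  case (ip_cons f vs g v g')
  from ip_cons.prems obtain g2 where g2: "iter_partial f vs g2"
    and d2: "\<And>x. ((\<lambda>t. g2 (x + t *\<^sub>R v)) has_vector_derivative h x) (at 0)"
    by (erule iter_partial_consE)
  have "g = g2" using ip_cons.IH[OF g2] .
  show ?case
  proof
    fix x show "g' x = h x"
      using vector_derivative_unique_at[OF ip_cons.hyps(2)[of x]] d2[of x] \<open>g = g2\<close> by simp
  qed
qed

lemma iter_partial_step:
  assumes "iter_partial f (v # vs) g" "iter_partial f vs g1"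
  shows "((\<lambda>t. g1 (x + t *\<^sub>R v)) has_vector_derivative g x) (at 0)"
proof -
  from assms(1) obtain g2 where g2: "iter_partial f vs g2"
    and d: "\<And>x. ((\<lambda>t. g2 (x + t *\<^sub>R v)) has_vector_derivative g x) (at 0)"
    by (erule iter_partial_consE)
  have "g2 = g1" by (rule iter_partial_unique[OF g2 assms(2)])
  thus ?thesis using d by simp
qed

lemma iter_partial_support:
  "iter_partial f vs g \<Longrightarrow> g x \<noteq> 0 \<Longrightarrow> x \<in> closure {x. f x \<noteq> 0}"
proof (induction arbitrary: x rule: iter_partial.induct)
  case (ip_nil f) thus ?case using closure_subset[of "{x. f x \<noteq> 0}"] by auto
next
  case (ip_cons f vs g v g')
  show ?case
  proof (rule ccontr)
    assume nx: "x \<notin> closure {x. f x \<noteq> 0}"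
    define U where "U = {t::real. x + t *\<^sub>R v \<in> - closure {x. f x \<noteq> 0}}"
    have "open ((\<lambda>t. x + t *\<^sub>R v) -` (- closure {x. f x \<noteq> 0}))"
      by (rule open_vimage) (simp_all add: continuous_intros)
    hence "open U" by (simp add: U_def vimage_def)
    moreover have "0 \<in> U" using nx by (simp add: U_def)
    ultimately have "((\<lambda>t. g (x + t *\<^sub>R v)) has_vector_derivative 0) (at 0)"
    proof (rule has_vector_derivative_transform_within_open[of "\<lambda>_. 0", rotated])
      fix y assume "y \<in> U"
      hence "x + y *\<^sub>R v \<notin> closure {x. f x \<noteq> 0}" by (simp add: U_def)
      thus "0 = g (x + y *\<^sub>R v)" using ip_cons.IH[of "x + y *\<^sub>R v"] by metis
    qed simp
    hence "g' x = 0" using vector_derivative_unique_at[OF ip_cons.hyps(2)[of x]] by simp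
    thus False using ip_cons.prems by simp
  qed
qed

lemma has_vector_derivative_shift:
  assumes "((\<lambda>h. g (a + h)) has_vector_derivative D) (at 0)"
  shows "(g has_vector_derivative D) (at a)"
proof -
  have f: "((\<lambda>t. t - a) has_vector_derivative 1) (at a)"
    using has_vector_derivative_diff[OF has_vector_derivative_id has_vector_derivative_const[of a]] by simp
  have "(((\<lambda>h. g (a + h)) \<circ> (\<lambda>t. t - a)) has_vector_derivative (1 *\<^sub>R D)) (at a)"
    by (rule vector_diff_chain_at[OF f]) (simp add: assms)
  thus ?thesis by (simp add: o_def)
qed

lemma partial_x0:
  fixes g :: "real \<times> real \<times> 'a::euclidean_space \<times> real \<Rightarrow> 'b::real_normed_vector"
  assumes "((\<lambda>t. g ((a, b, c, d) + t *\<^sub>R (1, 0))) has_vector_derivative D) (at 0)"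
  shows "((\<lambda>t. g (t, b, c, d)) has_vector_derivative D) (at a)"
  by (rule has_vector_derivative_shift) (use assms in simp)

lemma partial_x1:
  fixes g :: "real \<times> real \<times> 'a::euclidean_space \<times> real \<Rightarrow> 'b::real_normed_vector"
  assumes "((\<lambda>t. g ((a, b, c, d) + t *\<^sub>R (0, 1, 0))) has_vector_derivative D) (at 0)"
  shows "((\<lambda>t. g (a, t, c, d)) has_vector_derivative D) (at b)"
  by (rule has_vector_derivative_shift) (use assms in simp)

definition cont_supp_ball :: "real \<Rightarrow> ('c::real_normed_vector \<Rightarrow> 'b::real_normed_vector) \<Rightarrow> bool" where
  "cont_supp_ball R g \<longleftrightarrow> continuous_on UNIV g \<and> (\<forall>z. g z \<noteq> 0 \<longrightarrow> norm z \<le> R)"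

lemma C0_inf_partials:
  fixes u :: "real \<times> real \<times> 'a::euclidean_space \<times> real \<Rightarrow> complex"
  assumes "C0_inf u"
  obtains U0 U00 U1 U11 U01 R where
    "cont_supp_ball R u" "cont_supp_ball R U0" "cont_supp_ball R U00"
    "cont_supp_ball R U1" "cont_supp_ball R U11" "cont_supp_ball R U01"
    "\<And>a b c d. ((\<lambda>t. u (t, b, c, d)) has_vector_derivative U0 (a, b, c, d)) (at a)"
    "\<And>a b c d. ((\<lambda>t. U0 (t, b, c, d)) has_vector_derivative U00 (a, b, c, d)) (at a)"
    "\<And>a b c d. ((\<lambda>t. u (a, t, c, d)) has_vector_derivative U1 (a, b, c, d)) (at b)"
    "\<And>a b c d. ((\<lambda>t. U1 (a, t, c, d)) has_vector_derivative U11 (a, b, c, d)) (at b)"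
    "\<And>a b c d. ((\<lambda>t. U1 (t, b, c, d)) has_vector_derivative U01 (a, b, c, d)) (at a)"
    "\<And>a b c d. ((\<lambda>t. U0 (a, t, c, d)) has_vector_derivative U01 (a, b, c, d)) (at b)"
proof -
  define e0 :: "real \<times> real \<times> 'a \<times> real" where "e0 = (1, 0)"
  define e1 :: "real \<times> real \<times> 'a \<times> real" where "e1 = (0, 1, 0)"
  have B: "e0 \<in> Basis" "e1 \<in> Basis" unfolding e0_def e1_def by (auto simp: Basis_prod_def)
  have smooth: "\<And>vs. set vs \<subseteq> Basis \<Longrightarrow> \<exists>g. iter_partial u vs g \<and> continuous_on UNIV g"
    using assms by (auto simp: C0_inf_def smooth_fun_def)
  obtain R where R: "\<And>z. z \<in> closure {x. u x \<noteq> 0} \<Longrightarrow> norm z \<le> R"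
    using assms compact_imp_bounded bounded_iff unfolding C0_inf_def by metis
  have supp: "cont_supp_ball R g" if "iter_partial u vs g" "continuous_on UNIV g" for vs g
    using that R iter_partial_support unfolding cont_supp_ball_def by blast
  obtain U0 where U0: "iter_partial u [e0] U0" "continuous_on UNIV U0" using smooth[of "[e0]"] B by auto
  obtain U00 where U00: "iter_partial u [e0, e0] U00" "continuous_on UNIV U00" using smooth[of "[e0, e0]"] B by auto
  obtain U1 where U1: "iter_partial u [e1] U1" "continuous_on UNIV U1" using smooth[of "[e1]"] B by auto
  obtain U11 where U11: "iter_partial u [e1, e1] U11" "continuous_on UNIV U11" using smooth[of "[e1, e1]"] B by auto
  obtain U10 where U10: "iter_partial u [e0, e1] U10" "continuous_on UNIV U10" using smooth[of "[e0, e1]"] B by auto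
  obtain U01 where U01: "iter_partial u [e1, e0] U01" "continuous_on UNIV U01" using smooth[of "[e1, e0]"] B by auto
  have u: "iter_partial u [] u" "continuous_on UNIV u"
    using smooth[of "[]"] by (auto intro: iter_partial.ip_nil elim: iter_partial_nilE)
  have d0: "((\<lambda>t. u (t, b, c, d)) has_vector_derivative U0 (a, b, c, d)) (at a)" for a b c d
    by (rule partial_x0[OF iter_partial_step[OF U0(1) u(1), of "(a, b, c, d)", unfolded e0_def]])
  have d00: "((\<lambda>t. U0 (t, b, c, d)) has_vector_derivative U00 (a, b, c, d)) (at a)" for a b c d
    by (rule partial_x0[OF iter_partial_step[OF U00(1) U0(1), of "(a, b, c, d)", unfolded e0_def]])
  have d1: "((\<lambda>t. u (a, t, c, d)) has_vector_derivative U1 (a, b, c, d)) (at b)" for a b c d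
    by (rule partial_x1[OF iter_partial_step[OF U1(1) u(1), of "(a, b, c, d)", unfolded e1_def]])
  have d11: "((\<lambda>t. U1 (a, t, c, d)) has_vector_derivative U11 (a, b, c, d)) (at b)" for a b c d
    by (rule partial_x1[OF iter_partial_step[OF U11(1) U1(1), of "(a, b, c, d)", unfolded e1_def]])
  have d10: "((\<lambda>t. U1 (t, b, c, d)) has_vector_derivative U10 (a, b, c, d)) (at a)" for a b c d
    by (rule partial_x0[OF iter_partial_step[OF U10(1) U1(1), of "(a, b, c, d)", unfolded e0_def]])
  have d01: "((\<lambda>t. U0 (a, t, c, d)) has_vector_derivative U01 (a, b, c, d)) (at b)" for a b c d
    by (rule partial_x1[OF iter_partial_step[OF U01(1) U0(1), of "(a, b, c, d)", unfolded e1_def]])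
  have plane: "continuous_on UNIV (\<lambda>z. g (fst z, snd z, c, d))" if "continuous_on UNIV g" for g c d
    using continuous_on_compose_UNIV[OF that, of "\<lambda>z. (fst z, snd z, c, d)"]
    by (simp add: continuous_intros)
  have "U01 (a, b, c, d) = U10 (a, b, c, d)" for a b c d
    by (rule mixed_partials_symmetric[of "\<lambda>s t. u (s, t, c, d)" "\<lambda>s t. U0 (s, t, c, d)"
          "\<lambda>s t. U1 (s, t, c, d)"]) (use d0 d1 d01 d10 plane U10(2) U01(2) U1(2) in auto)
  hence d10': "((\<lambda>t. U1 (t, b, c, d)) has_vector_derivative U01 (a, b, c, d)) (at a)" for a b c d
    using d10 by simp
  show ?thesis
    by (rule that[OF supp[OF u] supp[OF U0] supp[OF U00] supp[OF U1] supp[OF U11] supp[OF U01]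
          d0 d00 d1 d11 d10' d01])
qed

text \<open>The partial Fourier transform in \<open>xn\<close>: for a continuous function supported in a ball it is a
  parameter integral over a compact interval, hence continuous, compactly supported in
  \<open>(x0, x1, x'')\<close>, and differentiable under the integral sign.\<close>
lemma norm_tuple4_le:
  fixes a b d :: real and c :: "'a::real_normed_vector"
  shows "norm (a, b, c) \<le> norm (a, b, c, d)" and "\<bar>d\<bar> \<le> norm (a, b, c, d)"
proof -
  have "norm c \<le> norm (c, d)" by (rule norm_fst_le)
  hence "(norm c)\<^sup>2 \<le> (norm (c, d))\<^sup>2" by (simp add: power_mono)
  thus "norm (a, b, c) \<le> norm (a, b, c, d)" by (simp add: norm_Pair)
  have "norm d \<le> norm (c, d)" by (rule norm_snd_le)
  also have "\<dots> \<le> norm (b, c, d)" by (rule norm_snd_le)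
  also have "\<dots> \<le> norm (a, b, c, d)" by (rule norm_snd_le)
  finally show "\<bar>d\<bar> \<le> norm (a, b, c, d)" by simp
qed

lemma uhat_eq_integral:
  fixes g :: "real \<times> real \<times> 'a::euclidean_space \<times> real \<Rightarrow> complex"
  assumes "cont_supp_ball R g"
  shows "uhat g a b c \<xi> = integral (cbox (-R) R) (\<lambda>xn. exp (- \<i> * complex_of_real (xn * \<xi>)) * g (a, b, c, xn))"
proof -
  let ?k = "\<lambda>xn. exp (- \<i> * complex_of_real (xn * \<xi>)) * g (a, b, c, xn)"
  have "continuous_on UNIV (\<lambda>xn. g (a, b, c, xn))"
    using assms continuous_on_compose_UNIV[of g "\<lambda>xn. (a, b, c, xn)"]
    by (simp add: cont_supp_ball_def continuous_intros)
  hence ck: "continuous_on UNIV ?k" by (auto intro!: continuous_intros)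
  have sk: "?k xn \<noteq> 0 \<Longrightarrow> norm xn \<le> R" for xn
    using assms norm_tuple4_le(2)[of xn a b c] by (force simp: cont_supp_ball_def)
  have "(?k has_integral (LINT xn|lborel. ?k xn)) UNIV"
    by (rule has_integral_integral_lborel[OF integrable_continuous_bounded_support[OF ck sk]])
  moreover have "(\<lambda>x. if x \<in> cbox (-R) R then ?k x else 0) = ?k"
    using sk by (force simp: fun_eq_iff)
  ultimately have "(?k has_integral (LINT xn|lborel. ?k xn)) (cbox (-R) R)"
    using has_integral_restrict_UNIV[of "cbox (-R) R" ?k] by simp
  thus ?thesis by (simp add: uhat_def integral_unique)
qed

lemma uhat_cc_fun:
  fixes g :: "real \<times> real \<times> 'a::euclidean_space \<times> real \<Rightarrow> complex"
  assumes g: "cont_supp_ball R g"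
  shows "cc_fun (\<lambda>a b c. uhat g a b c \<xi>)"
  unfolding cc_fun_def
proof
  let ?f = "\<lambda>z (t::real). exp (- \<i> * complex_of_real (t * \<xi>)) * g (fst z, fst (snd z), snd (snd z), t)"
  have "continuous_on UNIV (\<lambda>(z::real \<times> real \<times> 'a, t::real). g (fst z, fst (snd z), snd (snd z), t))"
    using g continuous_on_compose_UNIV[of g "\<lambda>(z::real \<times> real \<times> 'a, t::real). (fst z, fst (snd z), snd (snd z), t)"]
    by (simp add: cont_supp_ball_def split_beta continuous_intros)
  hence "continuous_on (UNIV \<times> cbox (-R) R) (\<lambda>(z, t). ?f z t)"
    by (auto simp: split_beta intro!: continuous_intros intro: continuous_on_subset)
  hence "continuous_on UNIV (\<lambda>z. integral (cbox (-R) R) (?f z))"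
    by (rule integral_continuous_on_param)
  thus "continuous_on UNIV (\<lambda>z. uhat g (fst z) (fst (snd z)) (snd (snd z)) \<xi>)"
    by (simp add: uhat_eq_integral[OF g])
  show "\<exists>R. \<forall>a b c. uhat g a b c \<xi> \<noteq> 0 \<longrightarrow> norm (a, b, c) \<le> R"
  proof (intro exI allI impI)
    fix a b c assume "uhat g a b c \<xi> \<noteq> 0"
    then obtain xn where "g (a, b, c, xn) \<noteq> 0" by (force simp: uhat_def)
    thus "norm (a, b, c) \<le> R" using g norm_tuple4_le(1)[of a b c xn] by (force simp: cont_supp_ball_def)
  qed
qed

lemma uhat_derivative:
  fixes g g' :: "real \<times> real \<times> 'a::euclidean_space \<times> real \<Rightarrow> complex"
    and p :: "real \<Rightarrow> real \<times> real \<times> 'a"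
  assumes g: "cont_supp_ball R g" and g': "cont_supp_ball R g'" and p: "continuous_on UNIV p"
    and deriv: "\<And>x xn. ((\<lambda>t. g (fst (p t), fst (snd (p t)), snd (snd (p t)), xn)) has_vector_derivative
              g' (fst (p x), fst (snd (p x)), snd (snd (p x)), xn)) (at x)"
  shows "((\<lambda>t. uhat g (fst (p t)) (fst (snd (p t))) (snd (snd (p t))) \<xi>) has_vector_derivative
           uhat g' (fst (p x)) (fst (snd (p x))) (snd (snd (p x))) \<xi>) (at x)"
proof -
  define E where "E = (\<lambda>t::real. exp (- \<i> * complex_of_real (t * \<xi>)))"
  define F where "F = (\<lambda>x t. E t * g (fst (p x), fst (snd (p x)), snd (snd (p x)), t))"
  define F' where "F' = (\<lambda>x t. E t * g' (fst (p x), fst (snd (p x)), snd (snd (p x)), t))"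
  have "continuous_on UNIV (\<lambda>(x, t). g' (fst (p x), fst (snd (p x)), snd (snd (p x)), t))"
    using g' continuous_on_compose_UNIV[of g' "\<lambda>(x, t). (fst (p x), fst (snd (p x)), snd (snd (p x)), t)"]
    by (simp add: cont_supp_ball_def split_beta continuous_intros continuous_on_compose2[OF p])
  hence cF': "continuous_on UNIV (\<lambda>(x, t). F' x t)"
    unfolding E_def F'_def by (auto simp: split_beta intro!: continuous_intros)
  have "continuous_on UNIV (\<lambda>t. g (fst (p x), fst (snd (p x)), snd (snd (p x)), t))" for x
    by (rule continuous_on_compose_UNIV[of g]) (use g in \<open>auto simp: cont_supp_ball_def intro!: continuous_intros\<close>)
  hence cF: "continuous_on UNIV (F x)" for x
    unfolding E_def F_def by (auto intro!: continuous_intros)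
  have "((\<lambda>x. integral (cbox (-R) R) (F x)) has_vector_derivative integral (cbox (-R) R) (F' x)) (at x within UNIV)"
  proof (rule leibniz_rule_vector_derivative)
    show "((\<lambda>x. F x t) has_vector_derivative F' x t) (at x within UNIV)" for x t
      unfolding F_def F'_def by (simp add: has_vector_derivative_mult_right deriv)
    show "F x integrable_on cbox (-R) R" for x
      by (rule integrable_continuous) (rule continuous_on_subset[OF cF], simp)
    show "continuous_on (UNIV \<times> cbox (-R) R) (\<lambda>(x, t). F' x t)"
      by (rule continuous_on_subset[OF cF']) simp
  qed auto
  thus ?thesis unfolding E_def F_def F'_def by (simp add: uhat_eq_integral[OF g] uhat_eq_integral[OF g'])
qed

lemma uhat_partial_x0:
  fixes g g' :: "real \<times> real \<times> 'a::euclidean_space \<times> real \<Rightarrow> complex"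
  assumes "cont_supp_ball R g" "cont_supp_ball R g'"
    and "\<And>a b c d. ((\<lambda>t. g (t, b, c, d)) has_vector_derivative g' (a, b, c, d)) (at a)"
  shows "((\<lambda>t. uhat g t b c \<xi>) has_vector_derivative uhat g' a b c \<xi>) (at a)"
  using uhat_derivative[OF assms(1,2), where p="\<lambda>t. (t, b, c)" and x=a and \<xi>=\<xi>] assms(3)
  by (simp add: continuous_intros)

lemma uhat_partial_x1:
  fixes g g' :: "real \<times> real \<times> 'a::euclidean_space \<times> real \<Rightarrow> complex"
  assumes "cont_supp_ball R g" "cont_supp_ball R g'"
    and "\<And>a b c d. ((\<lambda>t. g (a, t, c, d)) has_vector_derivative g' (a, b, c, d)) (at b)"
  shows "((\<lambda>t. uhat g a t c \<xi>) has_vector_derivative uhat g' a b c \<xi>) (at b)"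
  using uhat_derivative[OF assms(1,2), where p="\<lambda>t. (a, t, c)" and x=b and \<xi>=\<xi>] assms(3)
  by (simp add: continuous_intros)

lemma uhat_cc_second_order:
  fixes u :: "real \<times> real \<times> 'a::euclidean_space \<times> real \<Rightarrow> complex"
  assumes "C0_inf u"
  shows "\<exists>v0 v00 v1 v11 v01. cc_second_order (\<lambda>a b c. uhat u a b c \<xi>) v0 v00 v1 v11 v01"
proof -
  obtain U0 U00 U1 U11 U01 R where
    s: "cont_supp_ball R u" "cont_supp_ball R U0" "cont_supp_ball R U00"
       "cont_supp_ball R U1" "cont_supp_ball R U11" "cont_supp_ball R U01"
    and d: "\<And>a b c d. ((\<lambda>t. u (t, b, c, d)) has_vector_derivative U0 (a, b, c, d)) (at a)"
    "\<And>a b c d. ((\<lambda>t. U0 (t, b, c, d)) has_vector_derivative U00 (a, b, c, d)) (at a)"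
    "\<And>a b c d. ((\<lambda>t. u (a, t, c, d)) has_vector_derivative U1 (a, b, c, d)) (at b)"
    "\<And>a b c d. ((\<lambda>t. U1 (a, t, c, d)) has_vector_derivative U11 (a, b, c, d)) (at b)"
    "\<And>a b c d. ((\<lambda>t. U1 (t, b, c, d)) has_vector_derivative U01 (a, b, c, d)) (at a)"
    "\<And>a b c d. ((\<lambda>t. U0 (a, t, c, d)) has_vector_derivative U01 (a, b, c, d)) (at b)"
    using C0_inf_partials[OF assms] by metis
  have "cc_second_order (\<lambda>a b c. uhat u a b c \<xi>) (\<lambda>a b c. uhat U0 a b c \<xi>) (\<lambda>a b c. uhat U00 a b c \<xi>)
          (\<lambda>a b c. uhat U1 a b c \<xi>) (\<lambda>a b c. uhat U11 a b c \<xi>) (\<lambda>a b c. uhat U01 a b c \<xi>)"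
    by unfold_locales
      (rule uhat_cc_fun[OF s(1)] uhat_cc_fun[OF s(2)] uhat_cc_fun[OF s(3)] uhat_cc_fun[OF s(4)]
        uhat_cc_fun[OF s(5)] uhat_cc_fun[OF s(6)] uhat_partial_x0[OF s(1,2) d(1)] uhat_partial_x0[OF s(2,3) d(2)]
        uhat_partial_x1[OF s(1,4) d(3)] uhat_partial_x1[OF s(4,5) d(4)]
        uhat_partial_x0[OF s(4,6) d(5)] uhat_partial_x1[OF s(2,6) d(6)])+
  thus ?thesis by blast
qed

lemma nsq_as_slice_int: "nsq f = slice_int (\<lambda>b c. inner (f b c) (f b c))"
  unfolding nsq_def slice_int_def by (simp add: power2_norm_eq_inner)

lemma Mop_E1_E0_by_derivatives:
  fixes v v0 v00 v1 v11 v01 :: "real \<Rightarrow> real \<Rightarrow> 'a::euclidean_space \<Rightarrow> complex"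
  assumes "cc_second_order v v0 v00 v1 v11 v01"
  shows "Mop \<theta> \<xi> v a b c = - v00 a b c + \<theta> *\<^sub>R v11 a b c - (\<theta> * (b * \<xi>)\<^sup>2) *\<^sub>R v a b c"
    and "E1 \<xi> v x = slice_int (\<lambda>b c. inner (v0 x b c) (v0 x b c) + inner (v1 x b c) (v1 x b c)
                                  + (b * \<xi>)\<^sup>2 * inner (v x b c) (v x b c))"
    and "E0 \<xi> v x = 3 * slice_int (\<lambda>b c. inner (v x b c) (v x b c))"
proof -
  interpret cc_second_order v v0 v00 v1 v11 v01 by (rule assms)
  have D0v: "D0 v = (\<lambda>a b c. - \<i> * v0 a b c)"
    by (intro ext) (simp add: D0_def vector_derivative_at[OF d0])
  have D1v: "D1 v = (\<lambda>a b c. - \<i> * v1 a b c)"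
    by (intro ext) (simp add: D1_def vector_derivative_at[OF d1])
  have "D0 (D0 v) a b c = - v00 a b c"
    using vector_derivative_at[OF has_vector_derivative_mult_right[OF d00, of "- \<i>"]]
    unfolding D0v D0_def by simp
  moreover have "D1 (D1 v) a b c = - v11 a b c"
    using vector_derivative_at[OF has_vector_derivative_mult_right[OF d11, of "- \<i>"]]
    unfolding D1v D1_def by simp
  ultimately show "Mop \<theta> \<xi> v a b c = - v00 a b c + \<theta> *\<^sub>R v11 a b c - (\<theta> * (b * \<xi>)\<^sup>2) *\<^sub>R v a b c"
    unfolding Mop_def by (simp add: scaleR_conv_of_real algebra_simps)
  have n: "cc_fun (\<lambda>a b c. inner (v0 a b c) (v0 a b c))" "cc_fun (\<lambda>a b c. inner (v1 a b c) (v1 a b c))"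
    "cc_fun (\<lambda>a b c. (b * \<xi>)\<^sup>2 * inner (v a b c) (v a b c))"
    by (intro cc_fun_inner cc_fun_potential_density cc)+
  have "E1 \<xi> v x = slice_int (\<lambda>b c. inner (v0 x b c) (v0 x b c)) + slice_int (\<lambda>b c. inner (v1 x b c) (v1 x b c))
       + slice_int (\<lambda>b c. (b * \<xi>)\<^sup>2 * inner (v x b c) (v x b c))"
    unfolding E1_def D0v D1v nsq_def slice_int_def by (simp add: norm_mult power_mult_distrib power2_norm_eq_inner)
  thus "E1 \<xi> v x = slice_int (\<lambda>b c. inner (v0 x b c) (v0 x b c) + inner (v1 x b c) (v1 x b c)
                                  + (b * \<xi>)\<^sup>2 * inner (v x b c) (v x b c))"
    using slice_int_add[OF cc_fun_add[OF n(1,2)] n(3), of x] slice_int_add[OF n(1,2), of x] by simp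
  show "E0 \<xi> v x = 3 * slice_int (\<lambda>b c. inner (v x b c) (v x b c))"
    unfolding E0_def nsq_as_slice_int by simp
qed

text \<open>The estimate in the notation of the statement, with \<open>L = \<tau> \<rho>\<close>: the weight \<open>W\<close> is the square
  of the conjugation weight, and everything else is rewritten by the previous lemma.\<close>
lemma carleman_estimate_Mop:
  fixes v v0 v00 v1 v11 v01 :: "real \<Rightarrow> real \<Rightarrow> 'a::euclidean_space \<Rightarrow> complex"
    and \<theta> \<tau> \<rho> al \<xi> :: real
  assumes family: "cc_second_order v v0 v00 v1 v11 v01"
    and \<theta>: "\<theta> > 0" and L: "\<tau> * \<rho> > 0"
  defines "W \<equiv> \<lambda>x0. exp (2 * \<tau> * \<rho> * (x0 - al))"
  shows "(LINT x0:{0<..}|lborel. W x0 * nsq (Mop \<theta> \<xi> v x0))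
        \<ge> (1 / (8 + 2 / \<theta>)) * W 0 * (\<tau> * \<rho> * E1 \<xi> v 0 + \<tau> ^ 3 * \<rho> ^ 3 * E0 \<xi> v 0)
          + (1 / (8 + 2 / \<theta>)) * \<tau>\<^sup>2 * (LINT x0:{0<..}|lborel. W x0 * \<rho>\<^sup>2 * E1 \<xi> v x0)
          + (1 / (8 + 2 / \<theta>)) * \<tau> ^ 4 * (LINT x0:{0<..}|lborel. W x0 * \<rho> ^ 4 * E0 \<xi> v x0)"
proof -
  interpret exp_conjugation v v0 v00 v1 v11 v01 "\<tau> * \<rho>" al
    using family by (simp add: exp_conjugation_def)
  note E1 = Mop_E1_E0_by_derivatives(2)[OF family] and E0 = Mop_E1_E0_by_derivatives(3)[OF family]
  have W: "W a = (weight a)\<^sup>2" for a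
    unfolding W_def weight_def by (simp add: power2_eq_square exp_add[symmetric] algebra_simps)
  have lhs: "(LINT x0:{0<..}|lborel. W x0 * nsq (Mop \<theta> \<xi> v x0))
      = half_int (\<lambda>a b c. (weight a)\<^sup>2 * inner (Mv \<theta> \<xi> a b c) (Mv \<theta> \<xi> a b c))"
    unfolding half_int_def nsq_as_slice_int slice_int_def Mop_E1_E0_by_derivatives(1)[OF family] Mv_def W
    by simp
  show ?thesis
    unfolding lhs half_int_def[symmetric]
    using carleman_estimate[OF \<theta> L, of \<xi>]
    unfolding E1 E0 W half_int_def slice_int_def
    by (simp add: power_mult_distrib mult_ac)
qed

theorem lemma2p1:
  fixes \<theta> a :: real
  assumes "\<theta> > 0" and "a > 0"
  shows "\<exists>C>0. \<exists>\<tau>0>0. \<forall>s \<tau> \<xi> (u :: real \<times> real \<times> 'a::euclidean_space \<times> real \<Rightarrow> complex).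
    s \<ge> 1 \<longrightarrow> \<tau> \<ge> \<tau>0 \<longrightarrow> C0_inf u \<longrightarrow>
    (let v = (\<lambda>x0 x1 y. uhat u x0 x1 y \<xi>);
         W = (\<lambda>x0. exp (2 * \<tau> * jb \<xi> powr (1 / s) * (x0 - a)))
     in (LINT x0:{0<..}|lborel. W x0 * nsq (Mop \<theta> \<xi> v x0))
        \<ge> C * W 0 * (\<tau> * jb \<xi> powr (1 / s) * E1 \<xi> v 0 + \<tau> ^ 3 * jb \<xi> powr (3 / s) * E0 \<xi> v 0)
          + C * \<tau>\<^sup>2 * (LINT x0:{0<..}|lborel. W x0 * jb \<xi> powr (2 / s) * E1 \<xi> v x0)
          + C * \<tau> ^ 4 * (LINT x0:{0<..}|lborel. W x0 * jb \<xi> powr (4 / s) * E0 \<xi> v x0))"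
proof (rule exI[of _ "1 / (8 + 2 / \<theta>)"], intro conjI exI[of _ "1::real"] allI impI, goal_cases)
  case 1
  show ?case using \<open>\<theta> > 0\<close> by (simp add: add_pos_pos)
next
  case 2
  show ?case by simp
next
  case (3 s \<tau> \<xi> u)
  hence \<tau>: "1 \<le> \<tau>" and u: "C0_inf u" by simp_all
  obtain v0 v00 v1 v11 v01 where family: "cc_second_order (\<lambda>a b c. uhat u a b c \<xi>) v0 v00 v1 v11 v01"
    using uhat_cc_second_order[OF u] by blast
  define \<rho> where "\<rho> = jb \<xi> powr (1 / s)"
  have "jb \<xi> > 0" by (simp add: jb_def add_pos_nonneg)
  hence \<rho>: "\<rho> > 0" unfolding \<rho>_def by simp
  have powers: "jb \<xi> powr (real n / s) = \<rho> ^ n" for n :: nat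
    using \<rho> unfolding \<rho>_def by (simp add: powr_realpow[symmetric] powr_powr)
  have "\<tau> * \<rho> > 0" using \<tau> \<rho> by simp
  from carleman_estimate_Mop[OF family \<open>\<theta> > 0\<close> this, of a \<xi>]
  show ?case
    unfolding Let_def \<rho>_def[symmetric] powers[of 2, simplified] powers[of 3, simplified]
      powers[of 4, simplified] by simp
qed

end
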